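(* Let $\alpha>-1$, $0\le\gamma<2+\alpha$ and $1\le p\le q<\infty$. Let $\omega,\sigma$ be weights on $\mathcal H$. The following are equivalent: (a) there is $C_1>0$ such that for every $f\in L^p(\mathcal H,\omega dV_\alpha)$ and every $\lambda>0$, $$|\{z\in\mathcal H:\mathcal M_{\alpha,\gamma}f(z)>\lambda\}|_{\sigma,\alpha}\le\frac{C_1}{\lambda^q}\left(\int_{\mathcal H}|f|^p\omega\,dV_\alpha\right)^{q/p};$$ (b) there is $C_2>0$ such that for every interval $I\subset\mathbb R$, $$|Q_I|_\alpha^{\frac{\gamma}{2+\alpha}+\frac1q-\frac1p}\left(\frac1{|Q_I|_\alpha}\int_{Q_I}\omega^{1-p'}dV_\alpha\right)^{1/p'}\left(\frac1{|Q_I|_\alpha}\int_{Q_I}\sigma\,dV_\alpha\right)^{1/q}\le C_2,$$ where for $p=1$ the factor $\left(\frac1{|Q_I|_\alpha}\int_{Q_I}\omega^{1-p'}dV_\alpha\right)^{1/p'}$ is understood as $(\inf_{Q_I}\omega)^{-1}$.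
   Context: $\mathcal H=\{x+iy:x\in\mathbb R,\ y>0\}$; for $\alpha>-1$, $dV_\alpha(x+iy)=y^\alpha dx\,dy$. A weight is a nonnegative locally integrable function; $L^p(\mathcal H,\omega dV_\alpha)$ is the space of $f$ with $\int|f|^p\omega dV_\alpha<\infty$; $|E|_{\sigma,\alpha}=\int_E\sigma dV_\alpha$, $|E|_\alpha=\int_EdV_\alpha$; $p'$ is the conjugate exponent. For an interval $I$, $Q_I=\{x+iy:x\in I,0<y<|I|\}$. $\mathcal M_{\alpha,\gamma}f(z)=\sup\{|I|^{-(2+\alpha-\gamma)}\int_{Q_I}|f|dV_\alpha: I\subset\mathbb R\text{ interval}, z\in Q_I\}$. *)

theory Defs
  imports "HOL-Analysis.Analysis" "HOL-Probability.Essential_Supremum"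
begin

definition upper_half :: "complex set" where
  "upper_half = {z. 0 < Im z}"

text \<open>Carleson box Q_I over the interval I = [a,b] (a < b), so |I| = b - a.\<close>
definition cbox_Q :: "real \<Rightarrow> real \<Rightarrow> complex set" where
  "cbox_Q a b = {z. a \<le> Re z \<and> Re z \<le> b \<and> 0 < Im z \<and> Im z < b - a}"

definition Valpha :: "real \<Rightarrow> complex measure" where
  "Valpha \<alpha> = density lebesgue (\<lambda>z. ennreal (indicator upper_half z * Im z powr \<alpha>))"

definition weight :: "(complex \<Rightarrow> real) \<Rightarrow> bool" where
  "weight w \<longleftrightarrow> w \<in> borel_measurable lebesgue \<and> (\<forall>z\<in>upper_half. 0 \<le> w z) \<and>
     (\<forall>K. compact K \<and> K \<subseteq> upper_half \<longrightarrow> (\<integral>\<^sup>+ z\<in>K. ennreal (w z) \<partial>lebesgue) < \<infinity>)"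

definition wmeas :: "real \<Rightarrow> (complex \<Rightarrow> real) \<Rightarrow> complex set \<Rightarrow> ennreal" where
  "wmeas \<alpha> \<sigma> E = (\<integral>\<^sup>+ z\<in>E. ennreal (\<sigma> z) \<partial>Valpha \<alpha>)"

definition Mfrac :: "real \<Rightarrow> real \<Rightarrow> (complex \<Rightarrow> real) \<Rightarrow> complex \<Rightarrow> ennreal" where
  "Mfrac \<alpha> \<gamma> f z = (SUP I \<in> {(a, b). a < b \<and> z \<in> cbox_Q a b}.
      ennreal ((snd I - fst I) powr (- (2 + \<alpha> - \<gamma>))) *
      (\<integral>\<^sup>+ w\<in>cbox_Q (fst I) (snd I). ennreal \<bar>f w\<bar> \<partial>Valpha \<alpha>))"

definition epowr :: "ennreal \<Rightarrow> real \<Rightarrow> ennreal" where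
  "epowr x r = (if x = \<infinity> then \<infinity> else ennreal (enn2real x powr r))"

definition conj_exp :: "real \<Rightarrow> real" where
  "conj_exp p = p / (p - 1)"

text \<open>Pointwise w^(1-p') with values in [0,infinity]; w z = 0 gives infinity since 1 - p' < 0.\<close>
definition wpow :: "(complex \<Rightarrow> real) \<Rightarrow> real \<Rightarrow> complex \<Rightarrow> ennreal" where
  "wpow w p z = (if w z = 0 then \<infinity> else ennreal (w z powr (1 - conj_exp p)))"

text \<open>Essential infimum of w over the box Q_I (w.r.t. Lebesgue measure on Q_I, which has the
  same null sets as dV_alpha there).\<close>
definition essinf_box :: "(complex \<Rightarrow> real) \<Rightarrow> real \<Rightarrow> real \<Rightarrow> ereal" where
  "essinf_box w a b = - esssup (density lebesgue (indicator (cbox_Q a b))) (\<lambda>z. - ereal (w z))"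

definition inv_essinf_box :: "(complex \<Rightarrow> real) \<Rightarrow> real \<Rightarrow> real \<Rightarrow> ennreal" where
  "inv_essinf_box w a b = (if essinf_box w a b \<le> 0 then \<infinity>
      else ennreal (1 / real_of_ereal (essinf_box w a b)))"

definition omega_factor :: "real \<Rightarrow> real \<Rightarrow> (complex \<Rightarrow> real) \<Rightarrow> real \<Rightarrow> real \<Rightarrow> ennreal" where
  "omega_factor \<alpha> p w a b = (if p = 1 then inv_essinf_box w a b
     else epowr (ennreal (1 / measure (Valpha \<alpha>) (cbox_Q a b)) *
                 (\<integral>\<^sup>+ z\<in>cbox_Q a b. wpow w p z \<partial>Valpha \<alpha>)) (1 / conj_exp p))"

end

theory Submission
  imports Defs
begin

text \<open>Both directions compare the level sets of the maximal function with Carleson boxes.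
  For (a) \<Longrightarrow> (b), the weak-type bound is tested on functions supported in a single box Q,
  which then lies in the level set at half their average over Q. For p > 1 the extremal test
  functions are truncations of omega powr (1 - p'), whose weighted energy is at most their
  integral; for p = 1 they are indicators of the sets where omega lies below a level t > ess inf omega.
  For (b) \<Longrightarrow> (a), a level set is a countable union of boxes with rational endpoints on which
  the average of f is large. Any finitely many of them contain a disjoint subfamily whose tripled
  boxes cover them; on each triple, Hoelder's inequality and (b) bound the sigma-measure by a power
  q/p \<ge> 1 of the weighted energy of f on the box, and such powers of disjoint pieces sum to at
  most the power of the total energy.\<close>

section \<open>Boxes and the measure dV_alpha\<close>

lemma cbox_Q_borel [measurable]: "cbox_Q a b \<in> sets borel"
  unfolding cbox_Q_def by measurable

lemma upper_half_borel [measurable]: "upper_half \<in> sets borel"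
  unfolding upper_half_def by measurable

lemma cbox_Q_lebesgue [measurable]: "cbox_Q a b \<in> sets lebesgue"
  by (rule sets_completionI_sets) simp

lemma Valpha_density_measurable [measurable]:
  "(\<lambda>z. indicator upper_half z * Im z powr \<alpha> :: real) \<in> borel_measurable lebesgue"
  by (rule measurable_completion) measurable

lemma sets_Valpha [measurable_cong]: "sets (Valpha \<alpha>) = sets lebesgue"
  by (simp add: Valpha_def)

lemma space_Valpha [simp]: "space (Valpha \<alpha>) = UNIV"
  by (simp add: Valpha_def)

lemma cbox_Q_subset_upper_half: "cbox_Q a b \<subseteq> upper_half"
  by (auto simp: cbox_Q_def upper_half_def)

lemma nn_integral_powr_interval:
  assumes "\<alpha> > -1" "0 \<le> h"
  shows "(\<integral>\<^sup>+ y. ennreal (indicator {0<..<h} y * y powr \<alpha>) \<partial>lborel) = ennreal (h powr (\<alpha>+1) / (\<alpha>+1))"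
proof -
  have "(\<integral>\<^sup>+ y. ennreal (indicator {0<..<h} y * y powr \<alpha>) \<partial>lborel)
      = (\<integral>\<^sup>+ y. ennreal (indicator {0..h} y * y powr \<alpha>) \<partial>lborel)"
    by (rule nn_integral_cong_AE)
      (use AE_lborel_singleton[of h] in \<open>eventually_elim, auto simp: indicator_def\<close>)
  also have "\<dots> = ennreal (h powr (\<alpha>+1) / (\<alpha>+1))"
    by (rule nn_integral_has_integral_lebesgue) (use assms has_integral_powr_from_0 in auto)
  finally show ?thesis .
qed

lemma emeasure_Valpha_cbox_Q:
  assumes "\<alpha> > -1" "a < b"
  shows "emeasure (Valpha \<alpha>) (cbox_Q a b) = ennreal ((b-a) powr (2+\<alpha>) / (1+\<alpha>))"
proof -
  define F where "F = (\<lambda>c::complex. if c = 1 then (\<lambda>x::real. indicator {a..b} x :: real)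
      else (\<lambda>x. indicator {0<..<b-a} x * x powr \<alpha>))"
  have "emeasure (Valpha \<alpha>) (cbox_Q a b)
      = (\<integral>\<^sup>+ z. ennreal (indicator upper_half z * Im z powr \<alpha>) * indicator (cbox_Q a b) z \<partial>lebesgue)"
    unfolding Valpha_def by (subst emeasure_density) auto
  also have "\<dots> = (\<integral>\<^sup>+ z. (\<Prod>c\<in>Basis. ennreal (F c (z \<bullet> c))) \<partial>lborel)"
    unfolding nn_integral_completion
    by (rule nn_integral_cong)
      (auto simp: F_def Basis_complex_def cbox_Q_def upper_half_def indicator_def)
  also have "\<dots> = (\<Prod>c\<in>Basis. (\<integral>\<^sup>+x. F c x \<partial>lborel))"
    by (rule nn_integral_lborel_prod) (auto simp: F_def)
  also have "\<dots> = ennreal (b - a) * ennreal ((b-a) powr (\<alpha>+1) / (\<alpha>+1))"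
    using nn_integral_powr_interval[of \<alpha> "b-a"] assms
    by (simp add: Basis_complex_def F_def ennreal_indicator)
  also have "\<dots> = ennreal ((b-a) powr (2+\<alpha>) / (1+\<alpha>))"
    using assms by (simp add: ennreal_mult'[symmetric] powr_add add.commute power2_eq_square)
  finally show ?thesis .
qed

lemma measure_Valpha_cbox_Q:
  assumes "\<alpha> > -1" "a < b"
  shows "measure (Valpha \<alpha>) (cbox_Q a b) = (b-a) powr (2+\<alpha>) / (1+\<alpha>)"
  using emeasure_Valpha_cbox_Q[OF assms] assms unfolding measure_def by simp

lemma measure_Valpha_cbox_Q_pos:
  "\<alpha> > -1 \<Longrightarrow> a < b \<Longrightarrow> measure (Valpha \<alpha>) (cbox_Q a b) > 0"
  by (simp add: measure_Valpha_cbox_Q)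

lemma measure_Valpha_cbox_Q_powr:
  assumes "\<alpha> > -1" "a < b"
  shows "measure (Valpha \<alpha>) (cbox_Q a b) powr r = (b-a) powr ((2+\<alpha>) * r) * (1/(1+\<alpha>)) powr r"
  using assms by (simp add: measure_Valpha_cbox_Q powr_mult powr_powr divide_inverse)

lemma AE_Valpha: "AE x in lebesgue. P x \<Longrightarrow> AE x in Valpha \<alpha>. P x"
  unfolding Valpha_def by (subst AE_density) (auto elim: AE_mp)

text \<open>The density of dV_alpha is positive on the upper half-plane.\<close>
lemma AE_lebesgue_not_in_if_Valpha_null:
  assumes E[measurable]: "E \<in> sets lebesgue" and "E \<subseteq> upper_half" and "emeasure (Valpha \<alpha>) E = 0"
  shows "AE x in lebesgue. x \<notin> E"
proof -
  have "(\<integral>\<^sup>+ z. ennreal (indicator upper_half z * Im z powr \<alpha>) * indicator E z \<partial>lebesgue) = 0"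
    using assms(3) unfolding Valpha_def by (subst (asm) emeasure_density) auto
  then have "AE z in lebesgue. ennreal (indicator upper_half z * Im z powr \<alpha>) * indicator E z = 0"
    by (subst (asm) nn_integral_0_iff_AE) auto
  then show ?thesis
    by eventually_elim (use assms(2) in \<open>auto simp: upper_half_def indicator_def split: if_splits\<close>)
qed

lemma emeasure_Valpha_pos:
  assumes "E \<in> sets lebesgue" and "E \<subseteq> upper_half" and "\<not> (AE x in lebesgue. x \<notin> E)"
  shows "emeasure (Valpha \<alpha>) E > 0"
  using AE_lebesgue_not_in_if_Valpha_null[OF assms(1,2)] assms(3) by (auto simp: zero_less_iff_neq_zero)

lemma emeasure_Valpha_finite_subset_box:
  assumes "\<alpha> > -1" "a < b" "E \<subseteq> cbox_Q a b"
  shows "emeasure (Valpha \<alpha>) E < \<infinity>"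
proof -
  have "emeasure (Valpha \<alpha>) E \<le> emeasure (Valpha \<alpha>) (cbox_Q a b)"
    using assms(3) by (intro emeasure_mono) auto
  then show ?thesis using emeasure_Valpha_cbox_Q[OF assms(1,2)] by (simp add: le_less_trans)
qed

lemma weight_measurable [measurable_dest]: "weight w \<Longrightarrow> w \<in> borel_measurable lebesgue"
  by (simp add: weight_def)

lemma weight_nonneg: "weight w \<Longrightarrow> z \<in> upper_half \<Longrightarrow> 0 \<le> w z"
  by (simp add: weight_def)

lemma epowr_ennreal: "0 \<le> x \<Longrightarrow> epowr (ennreal x) r = ennreal (x powr r)"
  by (simp add: epowr_def)

lemma epowr_0 [simp]: "epowr 0 r = 0"
  by (simp add: epowr_def)

lemma epowr_top [simp]: "epowr top r = top"
  by (simp add: epowr_def)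

lemma epowr_mult_ennreal:
  assumes "0 \<le> c"
  shows "epowr (ennreal c * x) r = ennreal (c powr r) * epowr x r"
proof (cases x)
  case (real y)
  then show ?thesis using assms by (simp add: ennreal_mult'[symmetric] epowr_ennreal powr_mult)
next
  case top
  then show ?thesis
    using assms by (cases "c = 0") (auto simp: epowr_def ennreal_mult_top)
qed

lemma epowr_mono:
  assumes "x \<le> y" "0 \<le> r"
  shows "epowr x r \<le> epowr y r"
proof (cases "y = \<infinity>")
  case False
  then have "x \<noteq> \<infinity>" using assms(1) by (auto simp: top_unique)
  moreover have "enn2real x \<le> enn2real y" using assms(1) False by (simp add: enn2real_mono less_top)
  ultimately show ?thesis using False assms(2) by (simp add: epowr_def powr_mono2)
qed simp

lemma epowr_le_ennreal_imp:
  assumes "epowr S r \<le> ennreal R" "0 < r" "0 \<le> R"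
  shows "S \<le> ennreal (R powr (1 / r))"
proof (cases S)
  case (real s)
  then have "s powr r \<le> R" using assms by (simp add: epowr_ennreal)
  then have "(s powr r) powr (1 / r) \<le> R powr (1 / r)" using assms(2) by (intro powr_mono2) auto
  then show ?thesis using real assms(2) by (simp add: powr_powr ennreal_leI)
qed (use assms in \<open>simp add: top_unique\<close>)

lemma wmeas_mono: "A \<subseteq> B \<Longrightarrow> wmeas \<alpha> \<sigma> A \<le> wmeas \<alpha> \<sigma> B"
  unfolding wmeas_def by (intro nn_integral_mono) (auto simp: indicator_def)

lemma Mfrac_ge_box:
  assumes "a < b" "z \<in> cbox_Q a b"
  shows "ennreal ((b-a) powr (-(2+\<alpha>-\<gamma>))) * (\<integral>\<^sup>+ w\<in>cbox_Q a b. ennreal \<bar>f w\<bar> \<partial>Valpha \<alpha>) \<le> Mfrac \<alpha> \<gamma> f z"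
  unfolding Mfrac_def by (rule SUP_upper2[of "(a,b)"]) (use assms in auto)

lemma essinf_box_le_AE:
  assumes "w \<in> borel_measurable lebesgue"
  shows "AE z in lebesgue. z \<in> cbox_Q a b \<longrightarrow> essinf_box w a b \<le> ereal (w z)"
proof -
  let ?D = "density lebesgue (indicator (cbox_Q a b))"
  have "AE z in ?D. - ereal (w z) \<le> esssup ?D (\<lambda>z. - ereal (w z))" by (rule esssup_AE)
  then have "AE z in lebesgue. indicator (cbox_Q a b) z \<noteq> (0::ennreal) \<longrightarrow>
      - ereal (w z) \<le> esssup ?D (\<lambda>z. - ereal (w z))"
    by (subst (asm) AE_density) auto
  then show ?thesis
    unfolding essinf_box_def by eventually_elim (auto simp: ereal_uminus_le_reorder)
qed

lemma essinf_box_ge: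
  assumes "w \<in> borel_measurable lebesgue"
    and "AE z in lebesgue. z \<in> cbox_Q a b \<longrightarrow> t \<le> w z"
  shows "ereal t \<le> essinf_box w a b"
proof -
  let ?D = "density lebesgue (indicator (cbox_Q a b))"
  have "(\<lambda>z. - ereal (w z)) \<in> borel_measurable ?D"
    using assms(1) by (simp add: measurable_cong_sets[OF sets_density refl])
  moreover have "AE z in ?D. - ereal (w z) \<le> - ereal t"
    using assms(2) by (subst AE_density) (auto elim!: AE_mp)
  ultimately have "esssup ?D (\<lambda>z. - ereal (w z)) \<le> - ereal t" by (rule esssup_I)
  then show ?thesis unfolding essinf_box_def by (metis ereal_minus_le_minus ereal_uminus_uminus)
qed

lemma essinf_box_real:
  fixes \<alpha> :: real
  assumes "weight w" "\<alpha> > -1" "a < b"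
  obtains m where "essinf_box w a b = ereal m" "0 \<le> m"
proof -
  have "AE z in lebesgue. z \<in> cbox_Q a b \<longrightarrow> 0 \<le> w z"
    using assms(1) cbox_Q_subset_upper_half weight_nonneg by blast
  then have nonneg: "0 \<le> essinf_box w a b"
    using essinf_box_ge[of w a b 0] assms(1) by (auto simp: zero_ereal_def)
  have "essinf_box w a b \<noteq> \<infinity>"
  proof
    assume "essinf_box w a b = \<infinity>"
    then have "AE z in lebesgue. z \<notin> cbox_Q a b"
      using essinf_box_le_AE[of w a b] assms(1) by auto
    then have "AE z in Valpha \<alpha>. z \<notin> cbox_Q a b" by (rule AE_Valpha)
    then have "emeasure (Valpha \<alpha>) (cbox_Q a b) = 0"
      by (subst (asm) AE_iff_measurable[of "cbox_Q a b"]) auto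
    then show False using emeasure_Valpha_cbox_Q[OF assms(2,3)] assms by simp
  qed
  with nonneg show ?thesis using that by (cases "essinf_box w a b") auto
qed

section \<open>A covering lemma and integral inequalities\<close>

lemma cbox_Q_subset_triple_if_intersect:
  assumes "a < b" "d - c \<le> b - a" "cbox_Q a b \<inter> cbox_Q c d \<noteq> {}"
  shows "cbox_Q c d \<subseteq> cbox_Q (2 * a - b) (2 * b - a)"
  using assms unfolding cbox_Q_def by auto

lemma cbox_Q_nonempty: "a < b \<Longrightarrow> Complex a ((b-a)/2) \<in> cbox_Q a b"
  by (auto simp: cbox_Q_def)

text \<open>Greedy selection: the box of largest side is kept and every box meeting it is discarded,
  being contained in its triple.\<close>
lemma vitali_cover_boxes:
  fixes T :: "(real \<times> real) set"
  assumes "finite T" "\<forall>t\<in>T. fst t < snd t"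
  shows "\<exists>T'\<subseteq>T. (\<forall>s\<in>T'. \<forall>t\<in>T'. s \<noteq> t \<longrightarrow> cbox_Q (fst s) (snd s) \<inter> cbox_Q (fst t) (snd t) = {})
     \<and> (\<Union>t\<in>T. cbox_Q (fst t) (snd t)) \<subseteq> (\<Union>t\<in>T'. cbox_Q (2 * fst t - snd t) (2 * snd t - fst t))"
  using assms
proof (induction "card T" arbitrary: T rule: less_induct)
  case less
  show ?case
  proof (cases "T = {}")
    case True then show ?thesis by auto
  next
    case False
    obtain m where m_min: "is_arg_min (\<lambda>t. fst t - snd t) (\<lambda>t. t \<in> T) m"
      using ex_is_arg_min_if_finite[OF less.prems(1) False] by blast
    then have m: "m \<in> T" by (simp add: is_arg_min_linorder)
    have largest: "snd t - fst t \<le> snd m - fst m" if "t \<in> T" for t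
    proof -
      have "fst m - snd m \<le> fst t - snd t" using m_min that unfolding is_arg_min_linorder by blast
      then show ?thesis by simp
    qed
    define T1 where "T1 = {t\<in>T. cbox_Q (fst t) (snd t) \<inter> cbox_Q (fst m) (snd m) = {}}"
    have "m \<notin> T1" using cbox_Q_nonempty[of "fst m" "snd m"] less.prems m unfolding T1_def by auto
    then have "card T1 < card T" using less.prems(1) m by (intro psubset_card_mono) (auto simp: T1_def)
    moreover have "finite T1" "\<forall>t\<in>T1. fst t < snd t" using less.prems unfolding T1_def by auto
    ultimately obtain T1' where T1': "T1' \<subseteq> T1"
      "\<forall>s\<in>T1'. \<forall>t\<in>T1'. s \<noteq> t \<longrightarrow> cbox_Q (fst s) (snd s) \<inter> cbox_Q (fst t) (snd t) = {}"
      "(\<Union>t\<in>T1. cbox_Q (fst t) (snd t)) \<subseteq> (\<Union>t\<in>T1'. cbox_Q (2 * fst t - snd t) (2 * snd t - fst t))"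
      using less.hyps[of T1] by auto
    have "cbox_Q (fst t) (snd t) \<subseteq> cbox_Q (2 * fst m - snd m) (2 * snd m - fst m)"
      if "t \<in> T - T1" for t
      using that less.prems(2) m largest
      by (intro cbox_Q_subset_triple_if_intersect) (auto simp: T1_def Int_commute)
    then have "(\<Union>t\<in>T. cbox_Q (fst t) (snd t))
        \<subseteq> (\<Union>t\<in>insert m T1'. cbox_Q (2 * fst t - snd t) (2 * snd t - fst t))"
      using T1'(3) by blast
    moreover have "insert m T1' \<subseteq> T" using T1' m unfolding T1_def by auto
    moreover have "\<forall>s\<in>insert m T1'. \<forall>t\<in>insert m T1'. s \<noteq> t \<longrightarrow>
        cbox_Q (fst s) (snd s) \<inter> cbox_Q (fst t) (snd t) = {}"
      using T1' unfolding T1_def by (auto simp: Int_commute)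
    ultimately show ?thesis by blast
  qed
qed

lemma powr_add_le_powr_add:
  fixes x y r :: real
  assumes "0 \<le> x" "0 \<le> y" "1 \<le> r"
  shows "x powr r + y powr r \<le> (x + y) powr r"
proof (cases "x + y = 0")
  case True
  then have "x = 0" "y = 0" using assms by auto
  then show ?thesis using assms by simp
next
  case False
  then have s: "x + y > 0" using assms by auto
  have "u powr r \<le> (x+y) powr r * (u/(x+y))" if "0 \<le> u" "u \<le> x + y" for u
  proof -
    have "u powr r = (x+y) powr r * (u/(x+y)) powr r" using s that by (simp add: powr_divide)
    also have "(u/(x+y)) powr r \<le> (u/(x+y)) powr 1"
      using assms s that by (intro powr_mono') auto
    finally show ?thesis using that s by simp
  qed
  from this[of x] this[of y] have "x powr r + y powr r \<le> (x+y) powr r * (x/(x+y) + y/(x+y))"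
    using assms by (simp add: distrib_left)
  also have "x/(x+y) + y/(x+y) = 1" using s by (simp add: add_divide_distrib[symmetric])
  finally show ?thesis by simp
qed

lemma sum_powr_le_powr_sum:
  fixes x :: "'a \<Rightarrow> real"
  assumes "finite T" "\<And>t. t \<in> T \<Longrightarrow> 0 \<le> x t" "1 \<le> r"
  shows "(\<Sum>t\<in>T. x t powr r) \<le> (\<Sum>t\<in>T. x t) powr r"
  using assms
proof (induction T rule: finite_induct)
  case (insert a T)
  then have "(\<Sum>t\<in>insert a T. x t powr r) \<le> x a powr r + (\<Sum>t\<in>T. x t) powr r" by simp
  also have "\<dots> \<le> (x a + (\<Sum>t\<in>T. x t)) powr r"
    using insert by (intro powr_add_le_powr_add) (auto intro: sum_nonneg)
  finally show ?case using insert by simp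
qed simp

lemma sum_measure_powr_le:
  assumes "finite T" "disjoint_family_on A T" "A ` T \<subseteq> sets M"
    and "emeasure M (space M) = ennreal n" "0 \<le> n" "1 \<le> r"
  shows "(\<Sum>t\<in>T. measure M (A t) powr r) \<le> n powr r"
proof -
  interpret finite_measure M using assms(4) by (intro finite_measureI) simp
  have "(\<Sum>t\<in>T. measure M (A t) powr r) \<le> (\<Sum>t\<in>T. measure M (A t)) powr r"
    using assms(1,6) by (intro sum_powr_le_powr_sum) auto
  also have "(\<Sum>t\<in>T. measure M (A t)) = measure M (\<Union>t\<in>T. A t)"
    using assms(1-3) by (simp add: finite_measure_finite_Union)
  also have "measure M (\<Union>t\<in>T. A t) powr r \<le> measure M (space M) powr r"
    using assms(1,3,6) by (intro powr_mono2 bounded_measure) auto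
  finally show ?thesis using assms(4,5) by (simp add: emeasure_eq_measure)
qed

lemma Youngs_inequality_scaled:
  fixes x y A B p :: real
  assumes "p > 1" "0 \<le> x" "0 \<le> y" "A > 0" "B > 0"
  shows "x * y \<le> A powr (1/p) * B powr ((p-1)/p) *
    (x powr p / (p * A) + y powr (p/(p-1)) / (p/(p-1) * B))"
proof -
  define q where "q = p/(p-1)"
  have q1: "q > 1" and pq: "1/p + 1/q = 1" and pq': "(p-1)/p = 1/q"
    using assms(1) unfolding q_def by (auto simp: field_simps)
  define u where "u = x / A powr (1/p)"
  define v where "v = y / B powr (1/q)"
  have "x * y = A powr (1/p) * B powr (1/q) * (u * v)"
    using assms unfolding u_def v_def by simp
  also have "\<dots> \<le> A powr (1/p) * B powr (1/q) * (u powr p / p + v powr q / q)"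
    using Youngs_inequality[of p q u v] assms q1 pq unfolding u_def v_def by (intro mult_left_mono) auto
  also have "u powr p / p + v powr q / q = x powr p / (p * A) + y powr q / (q * B)"
    using assms q1 unfolding u_def v_def by (simp add: powr_divide powr_powr mult.commute)
  finally show ?thesis unfolding pq' q_def .
qed

lemma nn_integral_Holder:
  fixes g h :: "'a \<Rightarrow> real"
  assumes [measurable]: "g \<in> borel_measurable M" "h \<in> borel_measurable M"
    and gn: "\<And>x. 0 \<le> g x" and hn: "\<And>x. 0 \<le> h x" and p: "p > 1"
    and A: "(\<integral>\<^sup>+x. ennreal (g x powr p) \<partial>M) = ennreal A" "0 \<le> A"
    and B: "(\<integral>\<^sup>+x. ennreal (h x powr (p/(p-1))) \<partial>M) = ennreal B" "0 \<le> B"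
  shows "(\<integral>\<^sup>+x. ennreal (g x * h x) \<partial>M) \<le> ennreal (A powr (1/p) * B powr ((p-1)/p))"
proof (cases "A = 0 \<or> B = 0")
  case True
  then have "AE x in M. g x = 0 \<or> h x = 0"
  proof
    assume "A = 0"
    then have "AE x in M. ennreal (g x powr p) = 0"
      using A by (subst nn_integral_0_iff_AE[symmetric]) auto
    then show ?thesis by eventually_elim (use gn in auto)
  next
    assume "B = 0"
    then have "AE x in M. ennreal (h x powr (p/(p-1))) = 0"
      using B by (subst nn_integral_0_iff_AE[symmetric]) auto
    then show ?thesis by eventually_elim (use hn in auto)
  qed
  then have "(\<integral>\<^sup>+x. ennreal (g x * h x) \<partial>M) = (\<integral>\<^sup>+x. 0 \<partial>M)"
    by (intro nn_integral_cong_AE) auto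
  then show ?thesis by simp
next
  case False
  define q where "q = p/(p-1)"
  define c where "c = A powr (1/p) * B powr ((p-1)/p)"
  have Ap: "A > 0" and Bp: "B > 0" using A B False by auto
  have q: "q > 0" "1/p + 1/q = 1" using p unfolding q_def by (auto simp: field_simps)
  have "(\<integral>\<^sup>+x. ennreal (g x * h x) \<partial>M) \<le>
      (\<integral>\<^sup>+x. ennreal c * (ennreal (1/(p*A)) * ennreal (g x powr p) + ennreal (1/(q*B)) * ennreal (h x powr q)) \<partial>M)"
  proof (intro nn_integral_mono)
    fix x
    have "g x * h x \<le> c * (1/(p*A) * g x powr p + 1/(q*B) * h x powr q)"
      using Youngs_inequality_scaled[OF p gn hn Ap Bp, of x x] unfolding c_def q_def by (simp add: mult.commute)
    then show "ennreal (g x * h x) \<le>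
        ennreal c * (ennreal (1/(p*A)) * ennreal (g x powr p) + ennreal (1/(q*B)) * ennreal (h x powr q))"
      using Ap Bp p q by (simp add: c_def ennreal_mult'[symmetric] ennreal_plus[symmetric] del: ennreal_plus)
  qed
  also have "\<dots> = ennreal c * (ennreal (1/(p*A)) * ennreal A + ennreal (1/(q*B)) * ennreal B)"
    using A B unfolding q_def by (simp add: nn_integral_add nn_integral_cmult)
  also have "\<dots> = ennreal c * ennreal (1/p + 1/q)"
    using Ap Bp p q by (simp add: ennreal_mult'[symmetric] ennreal_plus[symmetric] del: ennreal_plus)
  finally show ?thesis using q(2) unfolding c_def by simp
qed

text \<open>Any countable union is the increasing union of finite subunions.\<close>
lemma emeasure_countable_UN_le:
  assumes "countable S" "\<And>t. t \<in> S \<Longrightarrow> Q t \<in> sets M"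
    and "\<And>T. finite T \<Longrightarrow> T \<subseteq> S \<Longrightarrow> emeasure M (\<Union>t\<in>T. Q t) \<le> B"
  shows "emeasure M (\<Union>t\<in>S. Q t) \<le> B"
proof (cases "S = {}")
  case False
  define e where "e = from_nat_into S"
  have rS: "range e = S" unfolding e_def using False assms(1) by simp
  define A where "A = (\<lambda>m. \<Union>t\<in>e ` {..<m}. Q t)"
  have "(\<Union>t\<in>S. Q t) = (\<Union>m. A m)"
    unfolding A_def rS[symmetric] by auto
  moreover have "(SUP m. emeasure M (A m)) = emeasure M (\<Union>m. A m)"
  proof (rule SUP_emeasure_incseq)
    show "range A \<subseteq> sets M" unfolding A_def using rS assms(2) by auto
    show "incseq A" unfolding A_def incseq_def by auto (meson lessThan_iff less_le_trans)
  qed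
  moreover have "emeasure M (A m) \<le> B" for m
    unfolding A_def by (rule assms(3)) (use rS in auto)
  ultimately show ?thesis by (metis SUP_least)
qed simp

section \<open>The two conditions and the level sets of the maximal function\<close>

definition weighted_energy :: "real \<Rightarrow> real \<Rightarrow> (complex \<Rightarrow> real) \<Rightarrow> (complex \<Rightarrow> real) \<Rightarrow> ennreal" where
  "weighted_energy \<alpha> p \<omega> f = (\<integral>\<^sup>+ z. ennreal (\<bar>f z\<bar> powr p * \<omega> z) \<partial>Valpha \<alpha>)"

definition weak_type_bound ::
    "real \<Rightarrow> real \<Rightarrow> real \<Rightarrow> real \<Rightarrow> (complex \<Rightarrow> real) \<Rightarrow> (complex \<Rightarrow> real) \<Rightarrow> real \<Rightarrow> bool" where
  "weak_type_bound \<alpha> \<gamma> p q \<omega> \<sigma> C \<longleftrightarrow> (\<forall>f. f \<in> borel_measurable lebesgue \<longrightarrow>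
      weighted_energy \<alpha> p \<omega> f < \<infinity> \<longrightarrow>
      (\<forall>lam>0. wmeas \<alpha> \<sigma> {z \<in> upper_half. Mfrac \<alpha> \<gamma> f z > ennreal lam}
         \<le> ennreal (C / lam powr q) * epowr (weighted_energy \<alpha> p \<omega> f) (q / p)))"

definition box_characteristic ::
    "real \<Rightarrow> real \<Rightarrow> real \<Rightarrow> real \<Rightarrow> (complex \<Rightarrow> real) \<Rightarrow> (complex \<Rightarrow> real) \<Rightarrow> real \<Rightarrow> real \<Rightarrow> ennreal" where
  "box_characteristic \<alpha> \<gamma> p q \<omega> \<sigma> a b =
     ennreal (measure (Valpha \<alpha>) (cbox_Q a b) powr (\<gamma> / (2 + \<alpha>) + 1 / q - 1 / p)) *
     omega_factor \<alpha> p \<omega> a b *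
     epowr (ennreal (1 / measure (Valpha \<alpha>) (cbox_Q a b)) * wmeas \<alpha> \<sigma> (cbox_Q a b)) (1 / q)"

lemma box_characteristic_eq:
  assumes "\<alpha> > -1" "a < b"
  shows "box_characteristic \<alpha> \<gamma> p q \<omega> \<sigma> a b =
    ennreal (measure (Valpha \<alpha>) (cbox_Q a b) powr (\<gamma> / (2 + \<alpha>) - 1 / p)) *
    (omega_factor \<alpha> p \<omega> a b * epowr (wmeas \<alpha> \<sigma> (cbox_Q a b)) (1 / q))"
proof -
  define v where "v = measure (Valpha \<alpha>) (cbox_Q a b)"
  have "v > 0" unfolding v_def using assms by (rule measure_Valpha_cbox_Q_pos)
  then have "v powr (\<gamma> / (2 + \<alpha>) + 1 / q - 1 / p) * (1 / v) powr (1 / q)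
      = v powr (\<gamma> / (2 + \<alpha>) + 1 / q - 1 / p) * v powr (- (1 / q))"
    by (subst powr_divide) (auto simp: powr_minus_divide)
  also have "\<dots> = v powr (\<gamma> / (2 + \<alpha>) - 1 / p)"
    by (simp add: powr_add[symmetric])
  finally have v: "v powr (\<gamma> / (2 + \<alpha>) + 1 / q - 1 / p) * (1 / v) powr (1 / q)
      = v powr (\<gamma> / (2 + \<alpha>) - 1 / p)" .
  have "box_characteristic \<alpha> \<gamma> p q \<omega> \<sigma> a b = ennreal (v powr (\<gamma> / (2 + \<alpha>) + 1 / q - 1 / p)) *
      omega_factor \<alpha> p \<omega> a b * (ennreal ((1 / v) powr (1 / q)) * epowr (wmeas \<alpha> \<sigma> (cbox_Q a b)) (1 / q))"
    unfolding box_characteristic_def v_def[symmetric] using \<open>v > 0\<close> by (simp add: epowr_mult_ennreal)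
  also have "\<dots> = ennreal (v powr (\<gamma> / (2 + \<alpha>) + 1 / q - 1 / p) * (1 / v) powr (1 / q)) *
      (omega_factor \<alpha> p \<omega> a b * epowr (wmeas \<alpha> \<sigma> (cbox_Q a b)) (1 / q))"
    by (simp add: ennreal_mult mult_ac)
  also have "\<dots> = ennreal (v powr (\<gamma> / (2 + \<alpha>) - 1 / p)) *
      (omega_factor \<alpha> p \<omega> a b * epowr (wmeas \<alpha> \<sigma> (cbox_Q a b)) (1 / q))"
    by (simp only: v)
  finally show ?thesis unfolding v_def .
qed

lemma ennreal_mult_powr_less_iff:
  fixes X :: ennreal
  assumes "lam > 0" "l > 0"
  shows "ennreal (lam * l powr s) < X \<longleftrightarrow> ennreal lam < ennreal (l powr (-s)) * X"
proof (cases X)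
  case (real x)
  have "l powr (-s) = 1 / l powr s" by (simp add: powr_minus divide_inverse)
  then have "lam * l powr s < x \<longleftrightarrow> lam < l powr (-s) * x"
    using assms by (simp add: pos_less_divide_eq)
  then show ?thesis using real assms by (simp add: ennreal_mult[symmetric] ennreal_less_iff)
next
  case top
  then show ?thesis using assms by (simp add: ennreal_mult_top)
qed

lemma cbox_Q_subset_level_set:
  assumes "a < b" "lam > 0"
    and "ennreal (lam * (b - a) powr (2+\<alpha>-\<gamma>)) < (\<integral>\<^sup>+ w\<in>cbox_Q a b. ennreal \<bar>f w\<bar> \<partial>Valpha \<alpha>)"
  shows "cbox_Q a b \<subseteq> {z \<in> upper_half. Mfrac \<alpha> \<gamma> f z > ennreal lam}"
proof
  fix z assume z: "z \<in> cbox_Q a b"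
  have "ennreal lam < ennreal ((b-a) powr (-(2+\<alpha>-\<gamma>))) * (\<integral>\<^sup>+ w\<in>cbox_Q a b. ennreal \<bar>f w\<bar> \<partial>Valpha \<alpha>)"
    using assms ennreal_mult_powr_less_iff by simp
  also have "\<dots> \<le> Mfrac \<alpha> \<gamma> f z" by (rule Mfrac_ge_box[OF assms(1) z])
  finally show "z \<in> {z \<in> upper_half. Mfrac \<alpha> \<gamma> f z > ennreal lam}"
    using z cbox_Q_subset_upper_half by auto
qed

lemma exists_larger_side:
  fixes X :: ennreal
  assumes "lam > 0" "l > 0" "ennreal (lam * l powr s) < X"
  obtains L where "l < L" "ennreal (lam * L powr s) < X"
proof -
  have "((\<lambda>L. ennreal (lam * L powr s)) \<longlongrightarrow> ennreal (lam * l powr s)) (at_right l)"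
    using assms(2) by (intro tendsto_ennrealI tendsto_intros) auto
  then have "\<forall>\<^sub>F L in at_right l. ennreal (lam * L powr s) < X"
    using assms(3) by (rule order_tendstoD)
  moreover have "\<forall>\<^sub>F L in at_right l. l < L" by (rule eventually_at_right_less)
  ultimately have "\<forall>\<^sub>F L in at_right l. l < L \<and> ennreal (lam * L powr s) < X"
    by (rule eventually_conj[rotated])
  then show ?thesis using that eventually_happens[of _ "at_right l"] by auto
qed

lemma rational_box_if_Mfrac_gt:
  assumes "\<gamma> < 2 + \<alpha>" "lam > 0" "Mfrac \<alpha> \<gamma> f z > ennreal lam"
  obtains a b where "a \<in> \<rat>" "b \<in> \<rat>" "a < b" "z \<in> cbox_Q a b"
    "ennreal (lam * (b - a) powr (2+\<alpha>-\<gamma>)) < (\<integral>\<^sup>+ w\<in>cbox_Q a b. ennreal \<bar>f w\<bar> \<partial>Valpha \<alpha>)"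
proof -
  define s where "s = 2+\<alpha>-\<gamma>"
  have sp: "s > 0" unfolding s_def using assms(1) by simp
  obtain a b where ab: "a < b" "z \<in> cbox_Q a b"
    and "ennreal lam < ennreal ((b - a) powr (- s)) * (\<integral>\<^sup>+ w\<in>cbox_Q a b. ennreal \<bar>f w\<bar> \<partial>Valpha \<alpha>)"
    using assms(3) unfolding Mfrac_def s_def by (auto simp: less_SUP_iff)
  then have big: "ennreal (lam * (b - a) powr s) < (\<integral>\<^sup>+ w\<in>cbox_Q a b. ennreal \<bar>f w\<bar> \<partial>Valpha \<alpha>)"
    using ennreal_mult_powr_less_iff[of lam "b - a" s] assms(2) by simp
  obtain L where L: "b - a < L" "ennreal (lam * L powr s) < (\<integral>\<^sup>+ w\<in>cbox_Q a b. ennreal \<bar>f w\<bar> \<partial>Valpha \<alpha>)"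
    using exists_larger_side[OF assms(2) _ big] ab(1) by auto
  define d where "d = (L - (b - a))/2"
  have "d > 0" unfolding d_def using L by simp
  obtain a' where a': "a' \<in> \<rat>" "a - d < a'" "a' < a" using Rats_dense_in_real[of "a-d" a] \<open>d > 0\<close> by auto
  obtain b' where b': "b' \<in> \<rat>" "b < b'" "b' < b + d" using Rats_dense_in_real[of b "b+d"] \<open>d > 0\<close> by auto
  have sub: "cbox_Q a b \<subseteq> cbox_Q a' b'" using a' b' unfolding cbox_Q_def by auto
  have "ennreal (lam * (b' - a') powr s) \<le> ennreal (lam * L powr s)"
    using ab assms(2) sp a' b' by (intro ennreal_leI mult_left_mono powr_mono2) (auto simp: d_def field_simps)
  also have "\<dots> < (\<integral>\<^sup>+ w\<in>cbox_Q a b. ennreal \<bar>f w\<bar> \<partial>Valpha \<alpha>)" by (rule L(2))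
  also have "\<dots> \<le> (\<integral>\<^sup>+ w\<in>cbox_Q a' b'. ennreal \<bar>f w\<bar> \<partial>Valpha \<alpha>)"
    using sub by (intro nn_integral_mono) (auto simp: indicator_def)
  finally show ?thesis using that[of a' b'] a' b' ab sub unfolding s_def by auto
qed

text \<open>The boxes witnessing the supremum in Mfrac can be enlarged slightly without losing the
  strict inequality.\<close>
lemma level_set_eq_UN_rational_boxes:
  assumes "\<gamma> < 2 + \<alpha>" "lam > 0"
  shows "{z \<in> upper_half. Mfrac \<alpha> \<gamma> f z > ennreal lam} =
    (\<Union>t\<in>{t. fst t \<in> \<rat> \<and> snd t \<in> \<rat> \<and> fst t < snd t \<and>
        ennreal (lam * (snd t - fst t) powr (2+\<alpha>-\<gamma>)) < (\<integral>\<^sup>+ w\<in>cbox_Q (fst t) (snd t). ennreal \<bar>f w\<bar> \<partial>Valpha \<alpha>)}.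
      cbox_Q (fst t) (snd t))" (is "?L = ?R")
proof
  show "?L \<subseteq> ?R"
  proof
    fix z assume "z \<in> ?L"
    then obtain a b where "a \<in> \<rat>" "b \<in> \<rat>" "a < b" "z \<in> cbox_Q a b"
      "ennreal (lam * (b - a) powr (2+\<alpha>-\<gamma>)) < (\<integral>\<^sup>+ w\<in>cbox_Q a b. ennreal \<bar>f w\<bar> \<partial>Valpha \<alpha>)"
      using rational_box_if_Mfrac_gt[OF assms] by blast
    then show "z \<in> ?R" by (intro UN_I[of "(a, b)"]) auto
  qed
  show "?R \<subseteq> ?L"
  proof
    fix z assume "z \<in> ?R"
    then obtain a b where "z \<in> cbox_Q a b" "a < b"
      "ennreal (lam * (b - a) powr (2+\<alpha>-\<gamma>)) < (\<integral>\<^sup>+ w\<in>cbox_Q a b. ennreal \<bar>f w\<bar> \<partial>Valpha \<alpha>)"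
      by auto
    then show "z \<in> ?L" using cbox_Q_subset_level_set[OF _ assms(2)] by blast
  qed
qed

section \<open>From the weak-type bound to the box condition\<close>

text \<open>The box lies in the level set at height half the average of g.\<close>
lemma wmeas_box_le_test_function:
  fixes g :: "complex \<Rightarrow> real"
  assumes weak: "weak_type_bound \<alpha> \<gamma> p q \<omega> \<sigma> C" and "0 \<le> C" "0 < p" "0 < q" "a < b"
    and g_meas [measurable]: "g \<in> borel_measurable lebesgue"
    and g_nonneg: "\<And>z. 0 \<le> g z" and g_supp: "\<And>z. z \<notin> cbox_Q a b \<Longrightarrow> g z = 0"
    and g_energy: "\<And>z. g z powr p * \<omega> z \<le> t * g z" and "0 \<le> t"
    and g_int: "(\<integral>\<^sup>+ z. ennreal (g z) \<partial>Valpha \<alpha>) = ennreal j" and "0 < j"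
  shows "wmeas \<alpha> \<sigma> (cbox_Q a b)
    \<le> ennreal (C * (2 * (b-a) powr (2+\<alpha>-\<gamma>)) powr q * t powr (q/p) * j powr (q/p - q))"
proof -
  define l where "l = 2 * (b-a) powr (2+\<alpha>-\<gamma>)"
  define lam where "lam = j / l"
  have l: "l > 0" and lam: "lam > 0" using assms unfolding lam_def l_def by auto
  have "weighted_energy \<alpha> p \<omega> g \<le> (\<integral>\<^sup>+ z. ennreal t * ennreal (g z) \<partial>Valpha \<alpha>)"
    unfolding weighted_energy_def
    using g_energy g_nonneg \<open>0 \<le> t\<close> by (intro nn_integral_mono) (simp add: ennreal_mult'[symmetric])
  also have "\<dots> = ennreal (t * j)"
    using g_int \<open>0 \<le> t\<close> by (simp add: nn_integral_cmult ennreal_mult')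
  finally have energy: "weighted_energy \<alpha> p \<omega> g \<le> ennreal (t * j)" .
  have "(\<integral>\<^sup>+ w\<in>cbox_Q a b. ennreal \<bar>g w\<bar> \<partial>Valpha \<alpha>) = ennreal j"
    unfolding g_int[symmetric] by (intro nn_integral_cong) (auto simp: g_nonneg g_supp indicator_def)
  then have "cbox_Q a b \<subseteq> {z \<in> upper_half. Mfrac \<alpha> \<gamma> g z > ennreal lam}"
    using assms(5) lam \<open>0 < j\<close> by (intro cbox_Q_subset_level_set) (auto simp: lam_def l_def ennreal_less_iff)
  then have "wmeas \<alpha> \<sigma> (cbox_Q a b) \<le> wmeas \<alpha> \<sigma> {z \<in> upper_half. Mfrac \<alpha> \<gamma> g z > ennreal lam}"
    by (rule wmeas_mono)
  also have "\<dots> \<le> ennreal (C / lam powr q) * epowr (weighted_energy \<alpha> p \<omega> g) (q / p)"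
  proof -
    have "weighted_energy \<alpha> p \<omega> g < \<infinity>" using energy by (simp add: le_less_trans)
    then show ?thesis using weak lam unfolding weak_type_bound_def by simp
  qed
  also have "\<dots> \<le> ennreal (C / lam powr q) * ennreal ((t * j) powr (q / p))"
  proof -
    have "epowr (weighted_energy \<alpha> p \<omega> g) (q / p) \<le> epowr (ennreal (t * j)) (q / p)"
      using energy assms by (intro epowr_mono) auto
    then show ?thesis using \<open>0 \<le> t\<close> \<open>0 < j\<close> by (simp add: epowr_ennreal mult_left_mono)
  qed
  also have "\<dots> = ennreal (C / lam powr q * (t * j) powr (q / p))"
    using \<open>0 \<le> C\<close> lam by (simp add: ennreal_mult'[symmetric])
  also have "C / lam powr q * (t * j) powr (q / p) = C * l powr q * t powr (q/p) * j powr (q/p - q)"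
    using l \<open>0 \<le> t\<close> \<open>0 < j\<close>
    by (simp add: lam_def powr_divide powr_mult powr_diff field_simps)
  finally show ?thesis unfolding l_def .
qed

lemma ennreal_le_powr_if_forall_gt:
  fixes S :: ennreal
  assumes "0 \<le> m" "0 < q" "\<And>t. m < t \<Longrightarrow> S \<le> ennreal (c * t powr q)"
  shows "S \<le> ennreal (c * m powr q)"
proof (rule tendsto_lowerbound)
  have "((\<lambda>t. t powr q) \<longlongrightarrow> m powr q) (at_right m)"
    using assms(1,2) eventually_at_right_less[of m]
    by (intro tendsto_powr' tendsto_ident_at tendsto_const) (auto elim: eventually_mono)
  then show "((\<lambda>t. ennreal (c * t powr q)) \<longlongrightarrow> ennreal (c * m powr q)) (at_right m)"
    by (intro tendsto_ennrealI tendsto_mult tendsto_const)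
  show "\<forall>\<^sub>F t in at_right m. S \<le> ennreal (c * t powr q)"
    using eventually_at_right_less[of m] by eventually_elim (rule assms(3))
qed (rule trivial_limit_at_right_real)

lemma wmeas_box_le_essinf_powr:
  fixes \<alpha> :: real
  assumes weak: "weak_type_bound \<alpha> \<gamma> 1 q \<omega> \<sigma> C" and "0 \<le> C" "\<alpha> > -1" "0 < q" "a < b" "weight \<omega>"
    and m: "essinf_box \<omega> a b = ereal m" "0 \<le> m"
  shows "wmeas \<alpha> \<sigma> (cbox_Q a b) \<le> ennreal (C * (2 * (b-a) powr (2+\<alpha>-\<gamma>)) powr q * m powr q)"
proof (rule ennreal_le_powr_if_forall_gt[OF m(2) \<open>0 < q\<close>])
  fix t assume "m < t"
  note [measurable] = weight_measurable[OF \<open>weight \<omega>\<close>]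
  define E where "E = cbox_Q a b \<inter> {z. \<omega> z < t}"
  have E [measurable]: "E \<in> sets lebesgue" unfolding E_def by measurable
  have "\<not> (AE z in lebesgue. z \<notin> E)"
  proof
    assume "AE z in lebesgue. z \<notin> E"
    then have "AE z in lebesgue. z \<in> cbox_Q a b \<longrightarrow> t \<le> \<omega> z"
      by eventually_elim (auto simp: E_def)
    then have "ereal t \<le> essinf_box \<omega> a b" by (intro essinf_box_ge) simp
    then show False using \<open>m < t\<close> m by simp
  qed
  then have "emeasure (Valpha \<alpha>) E > 0"
    using cbox_Q_subset_upper_half by (intro emeasure_Valpha_pos) (auto simp: E_def)
  moreover have "emeasure (Valpha \<alpha>) E < \<infinity>"
    by (rule emeasure_Valpha_finite_subset_box[OF assms(3,5)]) (auto simp: E_def)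
  ultimately obtain e where e: "emeasure (Valpha \<alpha>) E = ennreal e" "0 < e"
    by (cases "emeasure (Valpha \<alpha>) E") auto
  have g_int: "(\<integral>\<^sup>+ z. ennreal (indicator E z) \<partial>Valpha \<alpha>) = ennreal e"
    using e by (simp add: ennreal_indicator)
  have "wmeas \<alpha> \<sigma> (cbox_Q a b)
      \<le> ennreal (C * (2 * (b-a) powr (2+\<alpha>-\<gamma>)) powr q * t powr (q/1) * e powr (q/1 - q))"
    by (rule wmeas_box_le_test_function[OF weak _ _ _ _ _ _ _ _ _ g_int e(2)])
      (use assms(2-5) \<open>m < t\<close> m in \<open>auto simp: E_def indicator_def\<close>)
  then show "wmeas \<alpha> \<sigma> (cbox_Q a b) \<le> ennreal (C * (2 * (b-a) powr (2+\<alpha>-\<gamma>)) powr q * t powr q)"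
    using e by simp
qed

lemma omega_factor_mult_wmeas_le_p1:
  fixes \<alpha> :: real
  assumes weak: "weak_type_bound \<alpha> \<gamma> 1 q \<omega> \<sigma> C" and "0 \<le> C" "\<alpha> > -1" "0 < q" "a < b" "weight \<omega>"
  shows "omega_factor \<alpha> 1 \<omega> a b * epowr (wmeas \<alpha> \<sigma> (cbox_Q a b)) (1/q)
    \<le> ennreal (C powr (1/q) * (2 * (b-a) powr (2+\<alpha>-\<gamma>)))"
proof -
  define c where "c = C * (2 * (b-a) powr (2+\<alpha>-\<gamma>)) powr q"
  obtain m where m: "essinf_box \<omega> a b = ereal m" "0 \<le> m"
    using essinf_box_real assms(6,3,5) by blast
  have S: "wmeas \<alpha> \<sigma> (cbox_Q a b) \<le> ennreal (c * m powr q)"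
    unfolding c_def by (rule wmeas_box_le_essinf_powr[OF assms m])
  show ?thesis
  proof (cases "m = 0")
    case True
    then show ?thesis using S assms(4) by simp
  next
    case False
    then have "omega_factor \<alpha> 1 \<omega> a b = ennreal (1 / m)"
      using m by (simp add: omega_factor_def inv_essinf_box_def)
    moreover have "epowr (wmeas \<alpha> \<sigma> (cbox_Q a b)) (1/q) \<le> ennreal ((c * m powr q) powr (1/q))"
      using epowr_mono[OF S] assms(4) m(2) \<open>0 \<le> C\<close> by (simp add: epowr_ennreal c_def)
    moreover have "1 / m * (c * m powr q) powr (1/q) = C powr (1/q) * (2 * (b-a) powr (2+\<alpha>-\<gamma>))"
      using False m(2) \<open>0 \<le> C\<close> assms(4) by (simp add: c_def powr_mult powr_powr)
    ultimately show ?thesis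
      using m(2) by (metis ennreal_mult' mult_left_mono zero_le divide_nonneg_nonneg zero_le_one)
  qed
qed

lemma conj_exp_gt_1: "p > 1 \<Longrightarrow> conj_exp p > 1"
  by (simp add: conj_exp_def)

lemma inverse_conj_exp: "p > 1 \<Longrightarrow> 1 / conj_exp p = 1 - 1 / p"
  by (simp add: conj_exp_def field_simps)

lemma powr_mult_weight_le:
  fixes x w p :: real
  assumes "p > 1" "w > 0" "0 \<le> x" "x \<le> w powr (1 - conj_exp p)"
  shows "x powr p * w \<le> x"
proof (cases "x = 0")
  case False
  then have xp: "x > 0" using assms by simp
  have "x powr p = x * x powr (p - 1)" using xp by (simp add: powr_diff)
  also have "x powr (p-1) \<le> (w powr (1 - conj_exp p)) powr (p - 1)"
    using assms xp by (intro powr_mono2) auto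
  also have "(w powr (1 - conj_exp p)) powr (p - 1) = w powr (-1)"
    using assms by (simp add: powr_powr conj_exp_def field_simps)
  finally have "x powr p \<le> x / w" using xp assms(2) by (simp add: powr_minus divide_inverse)
  then show ?thesis using assms(2) by (simp add: pos_le_divide_eq)
qed simp

lemma epowr_SUP_mult_le:
  fixes j :: "nat \<Rightarrow> real" and S :: ennreal
  assumes "0 < q" "0 < r" "0 \<le> c" "\<And>n. 0 \<le> j n"
    and bound: "\<And>n. S * ennreal (j n powr (r * q)) \<le> ennreal c"
  shows "epowr (SUP n. ennreal (j n)) r * epowr S (1/q) \<le> ennreal (c powr (1/q))"
proof (cases S)
  case (real s)
  show ?thesis
  proof (cases "s = 0")
    case False
    with real have s: "s > 0" by simp
    define J where "J = (c / s) powr (1 / (r * q))"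
    have "j n \<le> J" for n
    proof -
      have "s * j n powr (r * q) \<le> c"
        using bound[of n] real s assms(3) by (simp add: ennreal_mult'[symmetric])
      then have "(j n powr (r * q)) powr (1 / (r * q)) \<le> (c / s) powr (1 / (r * q))"
        using s assms by (intro powr_mono2) (auto simp: field_simps)
      then show ?thesis using assms unfolding J_def by (simp add: powr_powr)
    qed
    then have "(SUP n. ennreal (j n)) \<le> ennreal J" by (intro SUP_least ennreal_leI)
    then have "epowr (SUP n. ennreal (j n)) r \<le> ennreal (J powr r)"
      using epowr_mono[of _ "ennreal J" r] assms(2) by (simp add: epowr_ennreal J_def)
    then have "epowr (SUP n. ennreal (j n)) r * epowr S (1/q) \<le> ennreal (J powr r * s powr (1/q))"
      using real s by (simp add: epowr_ennreal ennreal_mult'' mult_right_mono)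
    also have "J powr r * s powr (1/q) = c powr (1/q)"
      using s assms unfolding J_def by (simp add: powr_powr powr_divide)
    finally show ?thesis .
  qed (use real in simp)
next
  case top
  have "j n = 0" for n
  proof (rule ccontr)
    assume "j n \<noteq> 0"
    then have "S * ennreal (j n powr (r * q)) = \<infinity>"
      using top assms(4)[of n] by (simp add: ennreal_top_mult)
    then show False using bound[of n] by (simp add: top_unique)
  qed
  then show ?thesis by simp
qed

lemma nn_integral_wpow_eq_SUP_truncations:
  assumes "weight \<omega>" and nonzero: "AE z in lebesgue. z \<in> cbox_Q a b \<longrightarrow> \<omega> z \<noteq> 0"
  shows "(\<integral>\<^sup>+ z\<in>cbox_Q a b. wpow \<omega> p z \<partial>Valpha \<alpha>) = (SUP n. \<integral>\<^sup>+ z. ennreal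
      (min (\<omega> z powr (1 - conj_exp p)) (real n) * indicator (cbox_Q a b \<inter> {z. 0 < \<omega> z}) z) \<partial>Valpha \<alpha>)"
proof -
  note [measurable] = weight_measurable[OF \<open>weight \<omega>\<close>]
  define P where "P = cbox_Q a b \<inter> {z. 0 < \<omega> z}"
  define g where "g = (\<lambda>n z. min (\<omega> z powr (1 - conj_exp p)) (real n) * indicator P z)"
  have "AE z in Valpha \<alpha>. z \<in> cbox_Q a b \<longrightarrow> \<omega> z \<noteq> 0" using nonzero by (rule AE_Valpha)
  then have "(\<integral>\<^sup>+ z\<in>cbox_Q a b. wpow \<omega> p z \<partial>Valpha \<alpha>)
      = (\<integral>\<^sup>+ z. ennreal (\<omega> z powr (1 - conj_exp p)) * indicator P z \<partial>Valpha \<alpha>)"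
  proof (intro nn_integral_cong_AE, eventually_elim)
    case (elim z)
    then show ?case using weight_nonneg[OF \<open>weight \<omega>\<close>, of z] cbox_Q_subset_upper_half
      by (auto simp: wpow_def P_def indicator_def less_le)
  qed
  also have "\<dots> = (\<integral>\<^sup>+ z. (SUP n. ennreal (g n z)) \<partial>Valpha \<alpha>)"
  proof (intro nn_integral_cong)
    fix z
    obtain N :: nat where N: "\<omega> z powr (1 - conj_exp p) \<le> real N" using real_arch_simple by blast
    have "ennreal (\<omega> z powr (1 - conj_exp p)) * indicator P z \<le> (SUP n. ennreal (g n z))"
      by (rule SUP_upper2[of N]) (use N in \<open>auto simp: g_def indicator_def\<close>)
    moreover have "(SUP n. ennreal (g n z)) \<le> ennreal (\<omega> z powr (1 - conj_exp p)) * indicator P z"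
      by (intro SUP_least) (auto simp: g_def indicator_def intro!: ennreal_leI)
    ultimately show "ennreal (\<omega> z powr (1 - conj_exp p)) * indicator P z = (SUP n. ennreal (g n z))"
      by (rule antisym)
  qed
  also have "\<dots> = (SUP n. (\<integral>\<^sup>+ z. ennreal (g n z) \<partial>Valpha \<alpha>))"
    by (rule nn_integral_monotone_convergence_SUP)
      (auto simp: incseq_def le_fun_def g_def P_def indicator_def intro!: ennreal_leI)
  finally show ?thesis unfolding g_def P_def .
qed

lemma omega_factor_eq_pgt1:
  fixes \<alpha> :: real
  assumes "\<alpha> > -1" "a < b" "1 < p"
  shows "omega_factor \<alpha> p \<omega> a b = ennreal (measure (Valpha \<alpha>) (cbox_Q a b) powr (1/p - 1)) *
    epowr (\<integral>\<^sup>+ z\<in>cbox_Q a b. wpow \<omega> p z \<partial>Valpha \<alpha>) (1 / conj_exp p)"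
proof -
  define v where "v = measure (Valpha \<alpha>) (cbox_Q a b)"
  have "v > 0" unfolding v_def using assms(1,2) by (rule measure_Valpha_cbox_Q_pos)
  then have "(1 / v) powr (1 / conj_exp p) = v powr (1/p - 1)"
    using assms(3) by (subst powr_divide) (auto simp: inverse_conj_exp powr_minus_divide[symmetric])
  then show ?thesis
    using assms(3) \<open>v > 0\<close> by (simp add: omega_factor_def epowr_mult_ennreal v_def)
qed

text \<open>The indicator of the zero set of omega in Q has zero weighted energy, and positive
  average if that set is not null.\<close>
lemma wmeas_box_eq_0_if_weight_vanishes:
  fixes \<alpha> :: real
  assumes weak: "weak_type_bound \<alpha> \<gamma> p q \<omega> \<sigma> C" and "0 \<le> C" "\<alpha> > -1" "a < b" "0 < p" "0 < q" "weight \<omega>"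
    and vanish: "\<not> (AE z in lebesgue. z \<in> cbox_Q a b \<longrightarrow> \<omega> z \<noteq> 0)"
  shows "wmeas \<alpha> \<sigma> (cbox_Q a b) = 0"
proof -
  note [measurable] = weight_measurable[OF \<open>weight \<omega>\<close>]
  define Z where "Z = cbox_Q a b \<inter> {z. \<omega> z = 0}"
  have "emeasure (Valpha \<alpha>) Z > 0"
    using vanish cbox_Q_subset_upper_half by (intro emeasure_Valpha_pos) (auto simp: Z_def)
  moreover have "emeasure (Valpha \<alpha>) Z < \<infinity>"
    by (rule emeasure_Valpha_finite_subset_box[OF assms(3,4)]) (auto simp: Z_def)
  ultimately obtain e where e: "emeasure (Valpha \<alpha>) Z = ennreal e" "0 < e"
    by (cases "emeasure (Valpha \<alpha>) Z") auto
  have g_int: "(\<integral>\<^sup>+ z. ennreal (indicator Z z) \<partial>Valpha \<alpha>) = ennreal e"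
    using e by (simp add: ennreal_indicator Z_def)
  have "wmeas \<alpha> \<sigma> (cbox_Q a b)
      \<le> ennreal (C * (2 * (b-a) powr (2+\<alpha>-\<gamma>)) powr q * 0 powr (q/p) * e powr (q/p - q))"
    by (rule wmeas_box_le_test_function[OF weak _ _ _ _ _ _ _ _ _ g_int e(2)])
      (use assms in \<open>auto simp: Z_def indicator_def\<close>)
  then show ?thesis using assms(5,6) by simp
qed

lemma wmeas_box_mult_integral_powr_le:
  assumes weak: "weak_type_bound \<alpha> \<gamma> p q \<omega> \<sigma> C" and "0 \<le> C" "a < b" "1 < p" "p \<le> q"
    and [measurable]: "g \<in> borel_measurable lebesgue"
    and "\<And>z. 0 \<le> g z" "\<And>z. z \<notin> cbox_Q a b \<Longrightarrow> g z = 0" "\<And>z. g z powr p * \<omega> z \<le> g z"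
    and g_int: "(\<integral>\<^sup>+ z. ennreal (g z) \<partial>Valpha \<alpha>) = ennreal j" and "0 \<le> j"
  shows "wmeas \<alpha> \<sigma> (cbox_Q a b) * ennreal (j powr (q / conj_exp p))
    \<le> ennreal (C * (2 * (b-a) powr (2+\<alpha>-\<gamma>)) powr q)"
proof (cases "j = 0")
  case False
  define c where "c = C * (2 * (b-a) powr (2+\<alpha>-\<gamma>)) powr q"
  define r where "r = q / conj_exp p"
  have "j > 0" using False \<open>0 \<le> j\<close> by simp
  have "wmeas \<alpha> \<sigma> (cbox_Q a b) \<le> ennreal (c * 1 powr (q/p) * j powr (q/p - q))"
    unfolding c_def by (rule wmeas_box_le_test_function[OF weak _ _ _ _ _ _ _ _ _ g_int \<open>j > 0\<close>])
      (use assms in auto)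
  also have "q/p - q = - r"
  proof -
    have "r = q * (1 / conj_exp p)" unfolding r_def by simp
    also have "\<dots> = q - q / p" unfolding inverse_conj_exp[OF assms(4)] by (simp add: right_diff_distrib)
    finally show ?thesis by simp
  qed
  finally have "wmeas \<alpha> \<sigma> (cbox_Q a b) \<le> ennreal (c / j powr r)" by (simp add: powr_minus divide_inverse)
  then have "wmeas \<alpha> \<sigma> (cbox_Q a b) * ennreal (j powr r) \<le> ennreal (c / j powr r) * ennreal (j powr r)"
    by (rule mult_right_mono) simp
  also have "\<dots> = ennreal c" using \<open>j > 0\<close> by (simp add: ennreal_mult''[symmetric])
  finally show ?thesis unfolding c_def r_def .
qed (use assms(4,5) conj_exp_gt_1[OF assms(4)] in simp)

text \<open>The truncations of omega powr (1 - p') to the positivity set of omega satisfy the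
  hypotheses of wmeas_box_mult_integral_powr_le, and their integrals increase to the integral
  of omega powr (1 - p').\<close>
lemma epowr_wpow_mult_wmeas_le:
  fixes \<alpha> :: real
  assumes weak: "weak_type_bound \<alpha> \<gamma> p q \<omega> \<sigma> C" and "0 \<le> C" "\<alpha> > -1" "a < b" "1 < p" "p \<le> q" "weight \<omega>"
  shows "epowr (\<integral>\<^sup>+ z\<in>cbox_Q a b. wpow \<omega> p z \<partial>Valpha \<alpha>) (1 / conj_exp p) * epowr (wmeas \<alpha> \<sigma> (cbox_Q a b)) (1/q)
    \<le> ennreal ((C * (2 * (b-a) powr (2+\<alpha>-\<gamma>)) powr q) powr (1/q))"
proof (cases "AE z in lebesgue. z \<in> cbox_Q a b \<longrightarrow> \<omega> z \<noteq> 0")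
  case False
  then show ?thesis using wmeas_box_eq_0_if_weight_vanishes[OF assms(1-4)] assms(5,6,7) by simp
next
  case True
  note [measurable] = weight_measurable[OF \<open>weight \<omega>\<close>]
  define P where "P = cbox_Q a b \<inter> {z. 0 < \<omega> z}"
  define g where "g = (\<lambda>n z. min (\<omega> z powr (1 - conj_exp p)) (real n) * indicator P z)"
  have "(\<integral>\<^sup>+ z. ennreal (g n z) \<partial>Valpha \<alpha>) \<le> (\<integral>\<^sup>+ z. ennreal (real n) * indicator (cbox_Q a b) z \<partial>Valpha \<alpha>)" for n
    by (intro nn_integral_mono) (auto simp: g_def P_def indicator_def intro!: ennreal_leI)
  moreover have "(\<integral>\<^sup>+ z. ennreal (real n) * indicator (cbox_Q a b) z \<partial>Valpha \<alpha>) < \<infinity>" for n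
    using emeasure_Valpha_cbox_Q[OF assms(3,4)] by (simp add: nn_integral_cmult_indicator ennreal_mult_less_top)
  ultimately have g_finite: "(\<integral>\<^sup>+ z. ennreal (g n z) \<partial>Valpha \<alpha>) < \<infinity>" for n by (rule le_less_trans)
  define j where "j = (\<lambda>n. enn2real (\<integral>\<^sup>+ z. ennreal (g n z) \<partial>Valpha \<alpha>))"
  have j: "(\<integral>\<^sup>+ z. ennreal (g n z) \<partial>Valpha \<alpha>) = ennreal (j n)" "0 \<le> j n" for n
    unfolding j_def using g_finite[of n] by auto
  have W: "(\<integral>\<^sup>+ z\<in>cbox_Q a b. wpow \<omega> p z \<partial>Valpha \<alpha>) = (SUP n. ennreal (j n))"
    unfolding j(1)[symmetric] g_def P_def by (rule nn_integral_wpow_eq_SUP_truncations[OF assms(7) True])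
  have "wmeas \<alpha> \<sigma> (cbox_Q a b) * ennreal (j n powr (q / conj_exp p))
      \<le> ennreal (C * (2 * (b-a) powr (2+\<alpha>-\<gamma>)) powr q)" for n
  proof (rule wmeas_box_mult_integral_powr_le[OF weak assms(2,4-6) _ _ _ _ j])
    show "g n z powr p * \<omega> z \<le> g n z" for z
      using powr_mult_weight_le[OF assms(5), of "\<omega> z" "g n z"] by (cases "z \<in> P") (auto simp: g_def P_def)
  qed (auto simp: g_def P_def)
  then show ?thesis
    unfolding W using conj_exp_gt_1[OF assms(5)] assms(2,5,6) j(2)
    by (intro epowr_SUP_mult_le) (auto simp: mult.commute)
qed

lemma omega_factor_mult_wmeas_le_pgt1:
  fixes \<alpha> :: real
  assumes "weak_type_bound \<alpha> \<gamma> p q \<omega> \<sigma> C" "0 \<le> C" "\<alpha> > -1" "a < b" "1 < p" "p \<le> q" "weight \<omega>"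
  shows "omega_factor \<alpha> p \<omega> a b * epowr (wmeas \<alpha> \<sigma> (cbox_Q a b)) (1/q)
    \<le> ennreal (C powr (1/q) * (2 * (b-a) powr (2+\<alpha>-\<gamma>)) * measure (Valpha \<alpha>) (cbox_Q a b) powr (1/p - 1))"
proof -
  define v where "v = measure (Valpha \<alpha>) (cbox_Q a b)"
  define W where "W = (\<integral>\<^sup>+ z\<in>cbox_Q a b. wpow \<omega> p z \<partial>Valpha \<alpha>)"
  have "omega_factor \<alpha> p \<omega> a b * epowr (wmeas \<alpha> \<sigma> (cbox_Q a b)) (1/q)
      = ennreal (v powr (1/p - 1)) * (epowr W (1 / conj_exp p) * epowr (wmeas \<alpha> \<sigma> (cbox_Q a b)) (1/q))"
    unfolding omega_factor_eq_pgt1[OF assms(3-5)] v_def W_def by (simp add: mult.assoc)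
  also have "\<dots> \<le> ennreal (v powr (1/p - 1)) * ennreal ((C * (2 * (b-a) powr (2+\<alpha>-\<gamma>)) powr q) powr (1/q))"
    unfolding W_def using epowr_wpow_mult_wmeas_le[OF assms] by (rule mult_left_mono) simp
  also have "(C * (2 * (b-a) powr (2+\<alpha>-\<gamma>)) powr q) powr (1/q) = C powr (1/q) * (2 * (b-a) powr (2+\<alpha>-\<gamma>))"
    using assms(2,4-6) by (simp add: powr_mult powr_powr)
  finally show ?thesis unfolding v_def by (simp add: ennreal_mult'[symmetric] mult_ac)
qed

lemma omega_factor_mult_wmeas_le:
  fixes \<alpha> :: real
  assumes "weak_type_bound \<alpha> \<gamma> p q \<omega> \<sigma> C" "0 \<le> C" "\<alpha> > -1" "a < b" "1 \<le> p" "p \<le> q" "weight \<omega>"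
  shows "omega_factor \<alpha> p \<omega> a b * epowr (wmeas \<alpha> \<sigma> (cbox_Q a b)) (1/q)
    \<le> ennreal (C powr (1/q) * (2 * (b-a) powr (2+\<alpha>-\<gamma>)) * measure (Valpha \<alpha>) (cbox_Q a b) powr (1/p - 1))"
proof (cases "p = 1")
  case True
  then show ?thesis
    using omega_factor_mult_wmeas_le_p1[of \<alpha> \<gamma> q \<omega> \<sigma> C a b] assms measure_Valpha_cbox_Q_pos[OF assms(3,4)]
    by simp
next
  case False
  then show ?thesis using omega_factor_mult_wmeas_le_pgt1 assms by simp
qed

theorem box_characteristic_bounded_if_weak_type:
  fixes \<alpha> :: real
  assumes "\<alpha> > -1" "1 \<le> p" "p \<le> q" "weight \<omega>" "weak_type_bound \<alpha> \<gamma> p q \<omega> \<sigma> C" "0 < C"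
  shows "\<exists>C2>0. \<forall>a b. a < b \<longrightarrow> box_characteristic \<alpha> \<gamma> p q \<omega> \<sigma> a b \<le> ennreal C2"
proof (intro exI[of _ "C powr (1/q) * 2 * (1/(1+\<alpha>)) powr (\<gamma>/(2+\<alpha>) - 1)"] conjI allI impI)
  fix a b :: real assume "a < b"
  define v where "v = measure (Valpha \<alpha>) (cbox_Q a b)"
  have "box_characteristic \<alpha> \<gamma> p q \<omega> \<sigma> a b
      \<le> ennreal (v powr (\<gamma> / (2 + \<alpha>) - 1 / p)) *
        ennreal (C powr (1/q) * (2 * (b-a) powr (2+\<alpha>-\<gamma>)) * v powr (1/p - 1))"
    unfolding box_characteristic_eq[OF assms(1) \<open>a < b\<close>] v_def
    using assms \<open>a < b\<close> by (intro mult_left_mono omega_factor_mult_wmeas_le) auto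
  also have "\<dots> = ennreal (C powr (1/q) * 2 * ((b-a) powr (2+\<alpha>-\<gamma>) * v powr (\<gamma> / (2 + \<alpha>) - 1)))"
  proof -
    have "v powr (\<gamma> / (2 + \<alpha>) - 1 / p) * v powr (1/p - 1) = v powr (\<gamma> / (2 + \<alpha>) - 1)"
      by (simp add: powr_add[symmetric])
    then show ?thesis by (simp add: ennreal_mult'[symmetric] mult_ac)
  qed
  also have "(b-a) powr (2+\<alpha>-\<gamma>) * v powr (\<gamma> / (2 + \<alpha>) - 1) = (1/(1+\<alpha>)) powr (\<gamma>/(2+\<alpha>) - 1)"
  proof -
    have "(2 + \<alpha>) * (\<gamma> / (2 + \<alpha>) - 1) = - (2+\<alpha>-\<gamma>)" using assms(1) by (simp add: field_simps)
    then have "v powr (\<gamma> / (2 + \<alpha>) - 1) = (b-a) powr (- (2+\<alpha>-\<gamma>)) * (1/(1+\<alpha>)) powr (\<gamma>/(2+\<alpha>) - 1)"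
      unfolding v_def measure_Valpha_cbox_Q_powr[OF assms(1) \<open>a < b\<close>] by simp
    moreover have "(b-a) powr (2+\<alpha>-\<gamma>) * (b-a) powr (- (2+\<alpha>-\<gamma>)) = 1"
      using \<open>a < b\<close> by (simp add: powr_add[symmetric])
    ultimately show ?thesis by (metis mult.assoc mult_1)
  qed
  finally show "box_characteristic \<alpha> \<gamma> p q \<omega> \<sigma> a b \<le> ennreal (C powr (1/q) * 2 * (1/(1+\<alpha>)) powr (\<gamma>/(2+\<alpha>) - 1))"
    by (simp add: mult.assoc)
qed (use assms in simp)

section \<open>From the box condition to the weak-type bound\<close>

lemma nn_integral_Holder_weight:
  fixes f \<omega> :: "complex \<Rightarrow> real"
  assumes "1 < p" and [measurable]: "\<omega> \<in> borel_measurable lebesgue" "E \<in> sets lebesgue" "f \<in> borel_measurable lebesgue"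
    and nonneg: "\<And>z. z \<in> E \<Longrightarrow> 0 \<le> \<omega> z"
    and N: "(\<integral>\<^sup>+ z. ennreal (\<bar>f z\<bar> powr p * \<omega> z) * indicator E z \<partial>Valpha \<alpha>) = ennreal n" "0 \<le> n"
    and W: "(\<integral>\<^sup>+ z. wpow \<omega> p z * indicator E z \<partial>Valpha \<alpha>) = ennreal w" "0 \<le> w"
  shows "(\<integral>\<^sup>+ z. ennreal \<bar>f z\<bar> * indicator E z \<partial>Valpha \<alpha>) \<le> ennreal (n powr (1/p) * w powr (1 / conj_exp p))"
proof -
  have pp: "p / (p - 1) = conj_exp p" "(p - 1) / p = 1 / conj_exp p" "conj_exp p > 1"
    using assms(1) by (auto simp: conj_exp_def)
  have "AE z in Valpha \<alpha>. wpow \<omega> p z * indicator E z \<noteq> \<infinity>"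
    using W by (intro nn_integral_noteq_infinite) (auto simp: wpow_def)
  then have AE_pos: "AE z in Valpha \<alpha>. z \<in> E \<longrightarrow> 0 < \<omega> z"
    by eventually_elim (use nonneg in \<open>auto simp: wpow_def indicator_def less_le split: if_splits\<close>)
  define g where "g = (\<lambda>z. \<bar>f z\<bar> * \<omega> z powr (1/p) * indicator E z)"
  define h where "h = (\<lambda>z. \<omega> z powr (-1/p) * indicator E z)"
  have g_energy: "(\<integral>\<^sup>+ z. ennreal (g z powr p) \<partial>Valpha \<alpha>) = ennreal n"
    unfolding N(1)[symmetric] using assms(1) nonneg
    by (intro nn_integral_cong) (auto simp: g_def powr_mult powr_powr indicator_def)
  have "(\<integral>\<^sup>+ z. ennreal (h z powr (p/(p-1))) \<partial>Valpha \<alpha>) \<le> ennreal w"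
    unfolding W(1)[symmetric]
  proof (intro nn_integral_mono)
    fix z
    show "ennreal (h z powr (p/(p-1))) \<le> wpow \<omega> p z * indicator E z"
    proof (cases "z \<in> E \<and> \<omega> z \<noteq> 0")
      case True
      then have "h z powr (p/(p-1)) = \<omega> z powr (1 - conj_exp p)"
        using nonneg assms(1) unfolding h_def pp(1) by (simp add: powr_powr conj_exp_def field_simps)
      then show ?thesis using True by (auto simp: wpow_def)
    qed (auto simp: h_def wpow_def indicator_def)
  qed
  then obtain B where B: "(\<integral>\<^sup>+ z. ennreal (h z powr (p/(p-1))) \<partial>Valpha \<alpha>) = ennreal B" "0 \<le> B" "B \<le> w"
    using W(2) by (cases "(\<integral>\<^sup>+ z. ennreal (h z powr (p/(p-1))) \<partial>Valpha \<alpha>)") (auto simp: top_unique)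
  have "(\<integral>\<^sup>+ z. ennreal \<bar>f z\<bar> * indicator E z \<partial>Valpha \<alpha>) = (\<integral>\<^sup>+ z. ennreal (g z * h z) \<partial>Valpha \<alpha>)"
    using AE_pos
  proof (intro nn_integral_cong_AE, eventually_elim)
    case (elim z)
    then have "z \<in> E \<Longrightarrow> \<omega> z powr (1/p) * \<omega> z powr (-1/p) = 1" by (simp add: powr_add[symmetric])
    then show ?case by (auto simp: g_def h_def indicator_def mult_ac)
  qed
  also have "\<dots> \<le> ennreal (n powr (1/p) * B powr ((p-1)/p))"
    by (rule nn_integral_Holder[OF _ _ _ _ assms(1) g_energy N(2) B(1,2)])
      (auto simp: g_def h_def indicator_def)
  also have "\<dots> \<le> ennreal (n powr (1/p) * w powr (1 / conj_exp p))"
    unfolding pp(2) using B pp(3) by (intro ennreal_leI mult_left_mono powr_mono2) auto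
  finally show ?thesis .
qed

lemma nn_integral_box_le_p1:
  fixes \<alpha> :: real
  assumes "\<alpha> > -1" "a < b" "weight \<omega>" "E \<subseteq> cbox_Q a b"
    and "omega_factor \<alpha> 1 \<omega> a b = ennreal \<phi>" "0 \<le> \<phi>"
    and [measurable]: "E \<in> sets lebesgue" "f \<in> borel_measurable lebesgue"
    and N: "(\<integral>\<^sup>+ z. ennreal (\<bar>f z\<bar> * \<omega> z) * indicator E z \<partial>Valpha \<alpha>) = ennreal n"
  shows "(\<integral>\<^sup>+ z. ennreal \<bar>f z\<bar> * indicator E z \<partial>Valpha \<alpha>) \<le> ennreal (n * \<phi>)"
proof -
  note [measurable] = weight_measurable[OF assms(3)]
  obtain m where m: "essinf_box \<omega> a b = ereal m" "0 \<le> m"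
    using essinf_box_real assms(3,1,2) by blast
  with assms(5,6) have "m > 0" "\<phi> = 1 / m"
    by (auto simp: omega_factor_def inv_essinf_box_def split: if_splits)
  have "AE z in lebesgue. z \<in> cbox_Q a b \<longrightarrow> m \<le> \<omega> z"
    using essinf_box_le_AE[OF weight_measurable[OF assms(3)], of a b] m by simp
  then have "AE z in Valpha \<alpha>. z \<in> cbox_Q a b \<longrightarrow> m \<le> \<omega> z" by (rule AE_Valpha)
  then have "(\<integral>\<^sup>+ z. ennreal \<bar>f z\<bar> * indicator E z \<partial>Valpha \<alpha>)
      \<le> (\<integral>\<^sup>+ z. ennreal \<phi> * (ennreal (\<bar>f z\<bar> * \<omega> z) * indicator E z) \<partial>Valpha \<alpha>)"
  proof (intro nn_integral_mono_AE, eventually_elim)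
    case (elim z)
    have "\<bar>f z\<bar> \<le> \<phi> * (\<bar>f z\<bar> * \<omega> z)" if "m \<le> \<omega> z"
    proof -
      have "m * \<bar>f z\<bar> \<le> \<omega> z * \<bar>f z\<bar>" using that by (simp add: mult_right_mono)
      then show ?thesis using \<open>m > 0\<close> unfolding \<open>\<phi> = 1 / m\<close> by (simp add: field_simps)
    qed
    then show ?case using elim assms(4) \<open>m > 0\<close> \<open>\<phi> = 1 / m\<close>
      by (auto simp: indicator_def ennreal_mult'[symmetric] intro!: ennreal_leI)
  qed
  also have "\<dots> = ennreal (n * \<phi>)"
    using N \<open>\<phi> = 1 / m\<close> \<open>m > 0\<close>
    by (simp add: nn_integral_cmult ennreal_mult''[symmetric] divide_inverse mult.commute)
  finally show ?thesis .
qed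

lemma nn_integral_box_le_pgt1:
  fixes \<alpha> :: real
  assumes "\<alpha> > -1" "a < b" "1 < p" "weight \<omega>" "E \<in> sets lebesgue" "E \<subseteq> cbox_Q a b"
    and f: "f \<in> borel_measurable lebesgue"
    and \<phi>: "omega_factor \<alpha> p \<omega> a b = ennreal \<phi>" "0 \<le> \<phi>"
    and N: "(\<integral>\<^sup>+ z. ennreal (\<bar>f z\<bar> powr p * \<omega> z) * indicator E z \<partial>Valpha \<alpha>) = ennreal n" "0 \<le> n"
  shows "(\<integral>\<^sup>+ z. ennreal \<bar>f z\<bar> * indicator E z \<partial>Valpha \<alpha>)
    \<le> ennreal (n powr (1/p) * measure (Valpha \<alpha>) (cbox_Q a b) powr (1 - 1/p) * \<phi>)"
proof -
  note [measurable] = weight_measurable[OF assms(4)] assms(5)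
  define v where "v = measure (Valpha \<alpha>) (cbox_Q a b)"
  define W where "W = (\<integral>\<^sup>+ z\<in>cbox_Q a b. wpow \<omega> p z \<partial>Valpha \<alpha>)"
  have v: "v > 0" unfolding v_def using assms(1,2) by (rule measure_Valpha_cbox_Q_pos)
  have \<Phi>: "ennreal \<phi> = ennreal (v powr (1/p - 1)) * epowr W (1 / conj_exp p)"
    unfolding \<phi>(1)[symmetric] v_def W_def by (rule omega_factor_eq_pgt1[OF assms(1-3)])
  then have "W \<noteq> \<infinity>" using v by (auto simp: ennreal_mult_top)
  then obtain w where w: "W = ennreal w" "0 \<le> w" by (cases W) auto
  with \<Phi> \<phi>(2) have "\<phi> = w powr (1 / conj_exp p) * v powr (1/p - 1)"
    by (simp add: epowr_ennreal ennreal_mult'[symmetric])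
  then have "v powr (1 - 1/p) * \<phi> = w powr (1 / conj_exp p) * (v powr (1 - 1/p) * v powr (1/p - 1))"
    by (simp add: mult_ac)
  then have \<phi>_eq: "w powr (1 / conj_exp p) = v powr (1 - 1/p) * \<phi>"
    using v by (simp add: powr_add[symmetric])
  have "(\<integral>\<^sup>+ z. wpow \<omega> p z * indicator E z \<partial>Valpha \<alpha>) \<le> W"
    unfolding W_def using assms(6) by (intro nn_integral_mono) (auto simp: indicator_def)
  then obtain w' where w': "(\<integral>\<^sup>+ z. wpow \<omega> p z * indicator E z \<partial>Valpha \<alpha>) = ennreal w'" "0 \<le> w'" "w' \<le> w"
    using w by (cases "\<integral>\<^sup>+ z. wpow \<omega> p z * indicator E z \<partial>Valpha \<alpha>") (auto simp: top_unique)
  have "\<And>z. z \<in> E \<Longrightarrow> 0 \<le> \<omega> z"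
    using assms(6) cbox_Q_subset_upper_half weight_nonneg[OF assms(4)] by blast
  then have "(\<integral>\<^sup>+ z. ennreal \<bar>f z\<bar> * indicator E z \<partial>Valpha \<alpha>) \<le> ennreal (n powr (1/p) * w' powr (1 / conj_exp p))"
    by (rule nn_integral_Holder_weight[OF assms(3) weight_measurable[OF assms(4)] assms(5) f _ N w'(1,2)])
  also have "\<dots> \<le> ennreal (n powr (1/p) * w powr (1 / conj_exp p))"
    using w' conj_exp_gt_1[OF assms(3)] by (intro ennreal_leI mult_left_mono powr_mono2) auto
  finally show ?thesis unfolding \<phi>_eq v_def by (simp add: mult.assoc)
qed

lemma nn_integral_box_le_omega_factor:
  fixes \<alpha> :: real
  assumes "\<alpha> > -1" "a < b" "1 \<le> p" "weight \<omega>" "E \<in> sets lebesgue" "E \<subseteq> cbox_Q a b"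
    and "f \<in> borel_measurable lebesgue" "omega_factor \<alpha> p \<omega> a b = ennreal \<phi>" "0 \<le> \<phi>"
    and "(\<integral>\<^sup>+ z. ennreal (\<bar>f z\<bar> powr p * \<omega> z) * indicator E z \<partial>Valpha \<alpha>) = ennreal n" "0 \<le> n"
  shows "(\<integral>\<^sup>+ z. ennreal \<bar>f z\<bar> * indicator E z \<partial>Valpha \<alpha>)
    \<le> ennreal (n powr (1/p) * measure (Valpha \<alpha>) (cbox_Q a b) powr (1 - 1/p) * \<phi>)"
proof (cases "p = 1")
  case True
  then show ?thesis
    using nn_integral_box_le_p1[of \<alpha> a b \<omega> E \<phi> f n] assms measure_Valpha_cbox_Q_pos[OF assms(1,2)]
    by (simp add: mult_ac)
next
  case False
  then show ?thesis using nn_integral_box_le_pgt1[of \<alpha> a b p \<omega> E f \<phi> n] assms by simp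
qed

text \<open>Hoelder's inequality on the box, measured against the tripled box, combined with
  condition (b) for the tripled box.\<close>
lemma nn_integral_mult_wmeas_triple_le:
  fixes \<alpha> :: real
  assumes "\<alpha> > -1" "1 \<le> p" "weight \<omega>" "0 \<le> C2"
    and char: "box_characteristic \<alpha> \<gamma> p q \<omega> \<sigma> (2*a-b) (2*b-a) \<le> ennreal C2"
    and "a < b" and f: "f \<in> borel_measurable lebesgue"
    and N: "(\<integral>\<^sup>+ z. ennreal (\<bar>f z\<bar> powr p * \<omega> z) * indicator (cbox_Q a b) z \<partial>Valpha \<alpha>) = ennreal n" "0 \<le> n"
  shows "(\<integral>\<^sup>+ w\<in>cbox_Q a b. ennreal \<bar>f w\<bar> \<partial>Valpha \<alpha>) * epowr (wmeas \<alpha> \<sigma> (cbox_Q (2*a-b) (2*b-a))) (1/q)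
    \<le> ennreal (C2 * n powr (1/p) * measure (Valpha \<alpha>) (cbox_Q (2*a-b) (2*b-a)) powr (1 - \<gamma> / (2 + \<alpha>)))"
proof -
  define v where "v = measure (Valpha \<alpha>) (cbox_Q (2*a-b) (2*b-a))"
  define e where "e = \<gamma> / (2 + \<alpha>) - 1 / p"
  define \<Phi> where "\<Phi> = omega_factor \<alpha> p \<omega> (2*a-b) (2*b-a)"
  define S where "S = epowr (wmeas \<alpha> \<sigma> (cbox_Q (2*a-b) (2*b-a))) (1/q)"
  define X where "X = (\<integral>\<^sup>+ w\<in>cbox_Q a b. ennreal \<bar>f w\<bar> \<partial>Valpha \<alpha>)"
  have ab3: "2*a-b < 2*b-a" using \<open>a < b\<close> by simp
  have v: "v > 0" unfolding v_def using assms(1) ab3 by (rule measure_Valpha_cbox_Q_pos)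
  have char': "ennreal (v powr e) * (\<Phi> * S) \<le> ennreal C2"
    using char unfolding box_characteristic_eq[OF assms(1) ab3] v_def e_def \<Phi>_def S_def .
  show ?thesis
  proof (cases "\<Phi> = \<infinity>")
    case True
    then have "S = 0" using char' v by (cases "S = 0") (auto simp: ennreal_mult_top top_unique)
    then show ?thesis unfolding S_def by simp
  next
    case False
    then obtain \<phi> where \<phi>: "\<Phi> = ennreal \<phi>" "0 \<le> \<phi>" by (cases \<Phi>) auto
    have "X \<le> ennreal (n powr (1/p) * v powr (1 - 1/p) * \<phi>)"
      unfolding X_def v_def
      by (rule nn_integral_box_le_omega_factor[OF assms(1) ab3 assms(2,3) _ _ f \<phi>[unfolded \<Phi>_def] N])
        (use \<open>a < b\<close> in \<open>auto simp: cbox_Q_def\<close>)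
    then have "X * S \<le> ennreal (n powr (1/p) * v powr (1 - 1/p) * \<phi>) * S"
      by (rule mult_right_mono) simp
    also have "\<dots> = ennreal (n powr (1/p) * v powr (1 - 1/p - e)) * (ennreal (v powr e) * (\<Phi> * S))"
    proof -
      have "v powr (1 - 1/p) = v powr (1 - 1/p - e) * v powr e" by (simp add: powr_add[symmetric])
      then show ?thesis using \<phi> by (simp add: ennreal_mult'[symmetric] mult_ac)
    qed
    also have "\<dots> \<le> ennreal (n powr (1/p) * v powr (1 - 1/p - e)) * ennreal C2"
      using char' by (rule mult_left_mono) simp
    also have "1 - 1/p - e = 1 - \<gamma> / (2 + \<alpha>)" unfolding e_def by simp
    finally show ?thesis unfolding X_def S_def v_def using assms(4)
      by (simp add: ennreal_mult'[symmetric] mult_ac)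
  qed
qed

lemma wmeas_triple_box_le:
  fixes \<alpha> :: real
  assumes "\<alpha> > -1" "\<gamma> < 2 + \<alpha>" "1 \<le> p" "p \<le> q" "weight \<omega>" "0 \<le> C2"
    and char: "box_characteristic \<alpha> \<gamma> p q \<omega> \<sigma> (2*a-b) (2*b-a) \<le> ennreal C2"
    and "a < b" and f: "f \<in> borel_measurable lebesgue" and "lam > 0"
    and big: "ennreal (lam * (b-a) powr (2+\<alpha>-\<gamma>)) < (\<integral>\<^sup>+ w\<in>cbox_Q a b. ennreal \<bar>f w\<bar> \<partial>Valpha \<alpha>)"
    and N: "(\<integral>\<^sup>+ z. ennreal (\<bar>f z\<bar> powr p * \<omega> z) * indicator (cbox_Q a b) z \<partial>Valpha \<alpha>) = ennreal n" "0 \<le> n"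
  shows "wmeas \<alpha> \<sigma> (cbox_Q (2*a-b) (2*b-a))
    \<le> ennreal ((C2 * (1/(1+\<alpha>)) powr ((2+\<alpha>-\<gamma>)/(2+\<alpha>)) * 3 powr (2+\<alpha>-\<gamma>)) powr q / lam powr q * n powr (q/p))"
proof -
  define s where "s = 2 + \<alpha> - \<gamma>"
  define l where "l = lam * (b-a) powr s"
  define M where "M = C2 * (1/(1+\<alpha>)) powr (s/(2+\<alpha>)) * 3 powr s"
  define S where "S = wmeas \<alpha> \<sigma> (cbox_Q (2*a-b) (2*b-a))"
  have l: "l > 0" unfolding l_def using \<open>lam > 0\<close> \<open>a < b\<close> by simp
  have q: "q > 0" using assms(3,4) by simp
  have vol: "measure (Valpha \<alpha>) (cbox_Q (2*a-b) (2*b-a)) powr (1 - \<gamma> / (2 + \<alpha>))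
      = (b-a) powr s * 3 powr s * (1/(1+\<alpha>)) powr (s/(2+\<alpha>))"
  proof -
    have r: "1 - \<gamma> / (2 + \<alpha>) = s/(2+\<alpha>)" "(2 + \<alpha>) * (s / (2 + \<alpha>)) = s"
      using assms(1) by (simp_all add: s_def field_simps)
    have "measure (Valpha \<alpha>) (cbox_Q (2*a-b) (2*b-a)) powr (s/(2+\<alpha>))
        = ((2*b-a) - (2*a-b)) powr ((2+\<alpha>) * (s/(2+\<alpha>))) * (1/(1+\<alpha>)) powr (s/(2+\<alpha>))"
      using \<open>a < b\<close> by (intro measure_Valpha_cbox_Q_powr[OF assms(1)]) simp
    also have "((2*b-a) - (2*a-b)) powr ((2+\<alpha>) * (s/(2+\<alpha>))) = 3 powr s * (b-a) powr s"
      unfolding r(2) using \<open>a < b\<close> powr_mult[of 3 "b-a" s] by (simp add: algebra_simps)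
    finally show ?thesis unfolding r(1) by (simp only: mult_ac)
  qed
  have "ennreal l * epowr S (1/q) \<le> (\<integral>\<^sup>+ w\<in>cbox_Q a b. ennreal \<bar>f w\<bar> \<partial>Valpha \<alpha>) * epowr S (1/q)"
    using big unfolding l_def s_def by (intro mult_right_mono) auto
  also have "\<dots> \<le> ennreal (C2 * n powr (1/p) * ((b-a) powr s * 3 powr s * (1/(1+\<alpha>)) powr (s/(2+\<alpha>))))"
    unfolding S_def vol[symmetric] by (rule nn_integral_mult_wmeas_triple_le[OF assms(1,3,5,6) char \<open>a < b\<close> f N])
  also have "\<dots> = ennreal l * ennreal (n powr (1/p) * M / lam)"
    using l \<open>lam > 0\<close> unfolding l_def M_def by (simp add: ennreal_mult'[symmetric] field_simps)
  finally have "epowr S (1/q) \<le> ennreal (n powr (1/p) * M / lam)"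
    using l by (simp add: ennreal_mult_le_mult_iff)
  then have "S \<le> ennreal ((n powr (1/p) * M / lam) powr (1 / (1/q)))"
    using q assms(6) \<open>lam > 0\<close> by (intro epowr_le_ennreal_imp) (auto simp: M_def)
  also have "(n powr (1/p) * M / lam) powr (1 / (1/q)) = M powr q / lam powr q * n powr (q/p)"
    using assms(1,6) \<open>lam > 0\<close> N(2) by (simp add: M_def powr_mult powr_divide powr_powr)
  finally show ?thesis unfolding S_def M_def s_def .
qed

lemma wmeas_eq_emeasure_density:
  assumes "\<sigma> \<in> borel_measurable lebesgue" "E \<in> sets lebesgue"
  shows "wmeas \<alpha> \<sigma> E = emeasure (density (Valpha \<alpha>) (\<lambda>z. ennreal (\<sigma> z))) E"
  unfolding wmeas_def using assms by (subst emeasure_density) auto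

text \<open>For finitely many boxes on which the average of f is large, a disjoint subfamily whose
  triples cover them is selected and the triples are estimated individually.\<close>
lemma wmeas_UN_boxes_le:
  fixes \<alpha> :: real and T :: "(real \<times> real) set"
  assumes "\<alpha> > -1" "\<gamma> < 2 + \<alpha>" "1 \<le> p" "p \<le> q" "weight \<omega>" "weight \<sigma>" "0 \<le> C2"
    and char: "\<And>a b. a < b \<Longrightarrow> box_characteristic \<alpha> \<gamma> p q \<omega> \<sigma> a b \<le> ennreal C2"
    and f [measurable]: "f \<in> borel_measurable lebesgue" and "lam > 0"
    and energy: "weighted_energy \<alpha> p \<omega> f = ennreal n" "0 \<le> n"
    and T: "finite T" "\<And>t. t \<in> T \<Longrightarrow> fst t < snd t \<and>
      ennreal (lam * (snd t - fst t) powr (2+\<alpha>-\<gamma>)) < (\<integral>\<^sup>+ w\<in>cbox_Q (fst t) (snd t). ennreal \<bar>f w\<bar> \<partial>Valpha \<alpha>)"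
  shows "wmeas \<alpha> \<sigma> (\<Union>t\<in>T. cbox_Q (fst t) (snd t))
    \<le> ennreal ((C2 * (1/(1+\<alpha>)) powr ((2+\<alpha>-\<gamma>)/(2+\<alpha>)) * 3 powr (2+\<alpha>-\<gamma>)) powr q / lam powr q * n powr (q/p))"
proof -
  note [measurable] = weight_measurable[OF assms(5)] weight_measurable[OF assms(6)]
  define K where "K = (C2 * (1/(1+\<alpha>)) powr ((2+\<alpha>-\<gamma>)/(2+\<alpha>)) * 3 powr (2+\<alpha>-\<gamma>)) powr q / lam powr q"
  define Q where "Q = (\<lambda>t::real\<times>real. cbox_Q (fst t) (snd t))"
  define Q3 where "Q3 = (\<lambda>t::real\<times>real. cbox_Q (2 * fst t - snd t) (2 * snd t - fst t))"
  define Md where "Md = density (Valpha \<alpha>) (\<lambda>z. ennreal (\<sigma> z))"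
  define Nd where "Nd = density (Valpha \<alpha>) (\<lambda>z. ennreal (\<bar>f z\<bar> powr p * \<omega> z))"
  have "UNIV \<in> sets (Valpha \<alpha>)" using sets.top[of "Valpha \<alpha>"] by simp
  then have Nd_space: "emeasure Nd (space Nd) = ennreal n"
    using energy unfolding Nd_def by (simp add: emeasure_density weighted_energy_def)
  then interpret Nd: finite_measure Nd by (intro finite_measureI) simp
  have energy_Q: "(\<integral>\<^sup>+ z. ennreal (\<bar>f z\<bar> powr p * \<omega> z) * indicator (Q t) z \<partial>Valpha \<alpha>)
      = ennreal (measure Nd (Q t))" for t
    using Nd.emeasure_eq_measure[of "Q t"] by (simp add: Nd_def emeasure_density Q_def sets_Valpha)
  obtain T' where T': "T' \<subseteq> T" "\<forall>s\<in>T'. \<forall>t\<in>T'. s \<noteq> t \<longrightarrow> Q s \<inter> Q t = {}"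
      "(\<Union>t\<in>T. Q t) \<subseteq> (\<Union>t\<in>T'. Q3 t)"
    using vitali_cover_boxes[OF T(1)] T(2) unfolding Q_def Q3_def by blast
  have "finite T'" using T' T(1) by (auto intro: finite_subset)
  have "wmeas \<alpha> \<sigma> (\<Union>t\<in>T. Q t) = emeasure Md (\<Union>t\<in>T. Q t)"
    unfolding Md_def using T(1) by (intro wmeas_eq_emeasure_density) (auto simp: Q_def)
  also have "\<dots> \<le> emeasure Md (\<Union>t\<in>T'. Q3 t)"
    using T'(3) \<open>finite T'\<close> by (intro emeasure_mono) (auto simp: Q3_def Md_def sets_Valpha)
  also have "\<dots> \<le> (\<Sum>t\<in>T'. emeasure Md (Q3 t))"
    using \<open>finite T'\<close> by (intro emeasure_subadditive_finite) (auto simp: Q3_def Md_def sets_Valpha)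
  also have "\<dots> \<le> (\<Sum>t\<in>T'. ennreal (K * measure Nd (Q t) powr (q/p)))"
  proof (intro sum_mono)
    fix t assume "t \<in> T'"
    then have t: "fst t < snd t"
      "ennreal (lam * (snd t - fst t) powr (2+\<alpha>-\<gamma>)) < (\<integral>\<^sup>+ w\<in>cbox_Q (fst t) (snd t). ennreal \<bar>f w\<bar> \<partial>Valpha \<alpha>)"
      using T'(1) T(2) by auto
    have "wmeas \<alpha> \<sigma> (Q3 t) \<le> ennreal (K * measure Nd (Q t) powr (q/p))"
      unfolding Q3_def K_def Q_def
      by (rule wmeas_triple_box_le[OF assms(1-5,7) char t(1) f \<open>lam > 0\<close> t(2)
            energy_Q[unfolded Q_def] measure_nonneg]) (use t(1) in simp)
    then show "emeasure Md (Q3 t) \<le> ennreal (K * measure Nd (Q t) powr (q/p))"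
      unfolding Md_def by (subst wmeas_eq_emeasure_density[symmetric]) (auto simp: Q3_def)
  qed
  also have "\<dots> = ennreal (K * (\<Sum>t\<in>T'. measure Nd (Q t) powr (q/p)))"
    using \<open>lam > 0\<close> by (simp add: sum_distrib_left K_def)
  also have "\<dots> \<le> ennreal (K * n powr (q/p))"
    using T'(2) \<open>finite T'\<close> assms(3,4) energy(2) Nd_space
    by (intro ennreal_leI mult_left_mono sum_measure_powr_le)
      (auto simp: K_def disjoint_family_on_def Q_def Nd_def sets_Valpha)
  finally show ?thesis unfolding Q_def K_def .
qed

theorem weak_type_if_box_characteristic_bounded:
  fixes \<alpha> :: real
  assumes "\<alpha> > -1" "\<gamma> < 2 + \<alpha>" "1 \<le> p" "p \<le> q" "weight \<omega>" "weight \<sigma>" "0 \<le> C2"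
    and char: "\<And>a b. a < b \<Longrightarrow> box_characteristic \<alpha> \<gamma> p q \<omega> \<sigma> a b \<le> ennreal C2"
  shows "weak_type_bound \<alpha> \<gamma> p q \<omega> \<sigma> ((C2 * (1/(1+\<alpha>)) powr ((2+\<alpha>-\<gamma>)/(2+\<alpha>)) * 3 powr (2+\<alpha>-\<gamma>)) powr q)"
  unfolding weak_type_bound_def
proof (intro allI impI)
  fix f :: "complex \<Rightarrow> real" and lam :: real
  assume f [measurable]: "f \<in> borel_measurable lebesgue"
    and "weighted_energy \<alpha> p \<omega> f < \<infinity>" and "lam > 0"
  then obtain n where n: "weighted_energy \<alpha> p \<omega> f = ennreal n" "0 \<le> n"
    by (cases "weighted_energy \<alpha> p \<omega> f") auto
  define K where "K = (C2 * (1/(1+\<alpha>)) powr ((2+\<alpha>-\<gamma>)/(2+\<alpha>)) * 3 powr (2+\<alpha>-\<gamma>)) powr q"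
  define S where "S = {t. fst t \<in> \<rat> \<and> snd t \<in> \<rat> \<and> fst t < snd t \<and>
      ennreal (lam * (snd t - fst t) powr (2+\<alpha>-\<gamma>)) < (\<integral>\<^sup>+ w\<in>cbox_Q (fst t) (snd t). ennreal \<bar>f w\<bar> \<partial>Valpha \<alpha>)}"
  define Md where "Md = density (Valpha \<alpha>) (\<lambda>z. ennreal (\<sigma> z))"
  note [measurable] = weight_measurable[OF assms(6)]
  have "countable S"
    by (rule countable_subset[of _ "\<rat> \<times> \<rat>"]) (auto simp: S_def intro: countable_SIGMA countable_rat)
  have "wmeas \<alpha> \<sigma> {z \<in> upper_half. Mfrac \<alpha> \<gamma> f z > ennreal lam} = emeasure Md (\<Union>t\<in>S. cbox_Q (fst t) (snd t))"
    unfolding level_set_eq_UN_rational_boxes[OF assms(2) \<open>lam > 0\<close>] S_def[symmetric] Md_def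
    using \<open>countable S\<close> by (intro wmeas_eq_emeasure_density sets.countable_UN'') auto
  also have "\<dots> \<le> ennreal (K / lam powr q * n powr (q/p))"
  proof (rule emeasure_countable_UN_le[OF \<open>countable S\<close>])
    fix T assume "finite T" "T \<subseteq> S"
    then have "wmeas \<alpha> \<sigma> (\<Union>t\<in>T. cbox_Q (fst t) (snd t)) \<le> ennreal (K / lam powr q * n powr (q/p))"
      unfolding K_def
      by (intro wmeas_UN_boxes_le[OF assms(1-6) _ char f \<open>lam > 0\<close> n]) (use assms(7) S_def in auto)
    then show "emeasure Md (\<Union>t\<in>T. cbox_Q (fst t) (snd t)) \<le> ennreal (K / lam powr q * n powr (q/p))"
      unfolding Md_def using \<open>finite T\<close> by (subst wmeas_eq_emeasure_density[symmetric]) auto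
  qed (simp add: Md_def sets_Valpha)
  also have "\<dots> = ennreal (K / lam powr q) * epowr (weighted_energy \<alpha> p \<omega> f) (q / p)"
    using n \<open>lam > 0\<close> by (simp add: epowr_ennreal ennreal_mult'[symmetric] K_def)
  finally show "wmeas \<alpha> \<sigma> {z \<in> upper_half. Mfrac \<alpha> \<gamma> f z > ennreal lam}
      \<le> ennreal (K / lam powr q) * epowr (weighted_energy \<alpha> p \<omega> f) (q / p)" .
qed

theorem corollary4p5:
  fixes \<alpha> \<gamma> p q :: real and \<omega> \<sigma> :: "complex \<Rightarrow> real"
  assumes "\<alpha> > -1" and "0 \<le> \<gamma>" and "\<gamma> < 2 + \<alpha>"
    and "1 \<le> p" and "p \<le> q"
    and "weight \<omega>" and "weight \<sigma>"
  shows "(\<exists>C1>0. \<forall>f :: complex \<Rightarrow> real.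
            f \<in> borel_measurable lebesgue \<longrightarrow>
            (\<integral>\<^sup>+ z. ennreal (\<bar>f z\<bar> powr p * \<omega> z) \<partial>Valpha \<alpha>) < \<infinity> \<longrightarrow>
            (\<forall>lam>0. wmeas \<alpha> \<sigma> {z \<in> upper_half. Mfrac \<alpha> \<gamma> f z > ennreal lam}
                 \<le> ennreal (C1 / lam powr q) *
                   epowr (\<integral>\<^sup>+ z. ennreal (\<bar>f z\<bar> powr p * \<omega> z) \<partial>Valpha \<alpha>) (q / p)))
     \<longleftrightarrow>
         (\<exists>C2>0. \<forall>a b. a < b \<longrightarrow>
            ennreal (measure (Valpha \<alpha>) (cbox_Q a b) powr (\<gamma> / (2 + \<alpha>) + 1 / q - 1 / p)) *
            omega_factor \<alpha> p \<omega> a b *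
            epowr (ennreal (1 / measure (Valpha \<alpha>) (cbox_Q a b)) * wmeas \<alpha> \<sigma> (cbox_Q a b)) (1 / q)
            \<le> ennreal C2)"
  (is "?weak \<longleftrightarrow> ?char")
proof
  assume ?weak
  then obtain C1 where "C1 > 0" "weak_type_bound \<alpha> \<gamma> p q \<omega> \<sigma> C1"
    unfolding weak_type_bound_def weighted_energy_def by blast
  then show ?char
    using box_characteristic_bounded_if_weak_type[OF assms(1,4,5,6)]
    unfolding box_characteristic_def by blast
next
  assume ?char
  then obtain C2 where "C2 > 0" "\<And>a b. a < b \<Longrightarrow> box_characteristic \<alpha> \<gamma> p q \<omega> \<sigma> a b \<le> ennreal C2"
    unfolding box_characteristic_def by blast
  then have "weak_type_bound \<alpha> \<gamma> p q \<omega> \<sigma> ((C2 * (1/(1+\<alpha>)) powr ((2+\<alpha>-\<gamma>)/(2+\<alpha>)) * 3 powr (2+\<alpha>-\<gamma>)) powr q)"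
    using assms by (intro weak_type_if_box_characteristic_bounded) auto
  moreover have "(C2 * (1/(1+\<alpha>)) powr ((2+\<alpha>-\<gamma>)/(2+\<alpha>)) * 3 powr (2+\<alpha>-\<gamma>)) powr q > 0"
    using \<open>C2 > 0\<close> assms(1) by simp
  ultimately show ?weak unfolding weak_type_bound_def weighted_energy_def by blast
qed

end
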